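(* Let $M$ be a von Neumann algebra and let $a\in M$, $0\le a\le 1$, be strict. Then: (i) $r(1-a)=1$; (ii) if $b\in M$ with $0\le b\le 1$ is absolutely compatible with $a$ and $ab=ba$, then $b$ is a projection; (iii) if $b\in M$ with $0\le b\le 1$ is strict and $a$ is absolutely compatible with $b$, then $ab\neq ba$; (iv) if $x\in M$ satisfies $x^*a^2x=x^*x$, then $x=0$.
   Context: For $x$ in a C$^*$-algebra, $|x|=(x^*x)^{1/2}$. Elements $0\le a,b\le 1$ of a unital C$^*$-algebra are absolutely compatible if $|a-b|+|1-a-b|=1$. For a positive element $x$ of a von Neumann algebra $M$, $r(x)$ denotes its range projection (smallest projection $p$ with $px=x$). For $0\le a\le 1$ in $M$, the support projection is $s(a)=1-r(1-a)$ (equivalently the largest projection $p$ with $pa=p$), and $n(a)=1-r(a)$. A non-zero element $0\le a\le 1$ of $M$ is called strict if $s(a)=0=n(a)$. *)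

theory Defs
  imports Complex_Main
begin

text \<open>Complex Hilbert spaces (inner product conjugate-linear in the first argument, complete).\<close>
class chilbert = ab_group_add +
  fixes scaleC :: "complex \<Rightarrow> 'a \<Rightarrow> 'a"
    and cinner :: "'a \<Rightarrow> 'a \<Rightarrow> complex"
  assumes scaleC_add_right: "scaleC c (x + y) = scaleC c x + scaleC c y"
    and scaleC_add_left: "scaleC (c + d) x = scaleC c x + scaleC d x"
    and scaleC_scaleC: "scaleC c (scaleC d x) = scaleC (c * d) x"
    and scaleC_one: "scaleC 1 x = x"
    and cinner_commute: "cinner x y = cnj (cinner y x)"
    and cinner_add_right: "cinner x (y + z) = cinner x y + cinner x z"
    and cinner_scaleC_right: "cinner x (scaleC c y) = c * cinner x y"
    and cinner_self_nonneg: "Im (cinner x x) = 0 \<and> 0 \<le> Re (cinner x x)"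
    and cinner_self_eq_zero: "cinner x x = 0 \<longleftrightarrow> x = 0"
    and complete: "(\<forall>e>0. \<exists>N::nat. \<forall>m\<ge>N. \<forall>n\<ge>N. sqrt (Re (cinner (X m - X n) (X m - X n))) < e)
       \<Longrightarrow> (\<exists>L. \<forall>e>0. \<exists>N::nat. \<forall>n\<ge>N. sqrt (Re (cinner (X n - L) (X n - L))) < e)"

definition cnorm :: "'a::chilbert \<Rightarrow> real" where
  "cnorm x = sqrt (Re (cinner x x))"

definition bounded_op :: "('a::chilbert \<Rightarrow> 'a) \<Rightarrow> bool" where
  "bounded_op T \<longleftrightarrow> (\<forall>x y. T (x + y) = T x + T y) \<and> (\<forall>c x. T (scaleC c x) = scaleC c (T x))
     \<and> (\<exists>K. \<forall>x. cnorm (T x) \<le> K * cnorm x)"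

definition adj :: "('a::chilbert \<Rightarrow> 'a) \<Rightarrow> ('a \<Rightarrow> 'a)" where
  "adj T = (THE S. \<forall>x y. cinner (T x) y = cinner x (S y))"

definition op_zero :: "'a::chilbert \<Rightarrow> 'a" where "op_zero = (\<lambda>_. 0)"
definition op_add :: "('a::chilbert \<Rightarrow> 'a) \<Rightarrow> ('a \<Rightarrow> 'a) \<Rightarrow> ('a \<Rightarrow> 'a)" where
  "op_add A B = (\<lambda>x. A x + B x)"
definition op_sub :: "('a::chilbert \<Rightarrow> 'a) \<Rightarrow> ('a \<Rightarrow> 'a) \<Rightarrow> ('a \<Rightarrow> 'a)" where
  "op_sub A B = (\<lambda>x. A x - B x)"

definition commutant :: "('a::chilbert \<Rightarrow> 'a) set \<Rightarrow> ('a \<Rightarrow> 'a) set" where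
  "commutant S = {T. bounded_op T \<and> (\<forall>A\<in>S. T \<circ> A = A \<circ> T)}"

definition von_neumann_algebra :: "('a::chilbert \<Rightarrow> 'a) set \<Rightarrow> bool" where
  "von_neumann_algebra M \<longleftrightarrow> M \<subseteq> {T. bounded_op T} \<and> (\<forall>T\<in>M. adj T \<in> M)
     \<and> commutant (commutant M) = M"

definition positive_op :: "('a::chilbert \<Rightarrow> 'a) \<Rightarrow> bool" where
  "positive_op T \<longleftrightarrow> (\<forall>x. Im (cinner x (T x)) = 0 \<and> 0 \<le> Re (cinner x (T x)))"

definition op_le :: "('a::chilbert \<Rightarrow> 'a) \<Rightarrow> ('a \<Rightarrow> 'a) \<Rightarrow> bool" where
  "op_le A B \<longleftrightarrow> positive_op (op_sub B A)"

definition abs_op :: "('a::chilbert \<Rightarrow> 'a) \<Rightarrow> ('a \<Rightarrow> 'a)" where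
  "abs_op x = (THE y. bounded_op y \<and> positive_op y \<and> y \<circ> y = adj x \<circ> x)"

definition is_proj :: "('a::chilbert \<Rightarrow> 'a) \<Rightarrow> bool" where
  "is_proj p \<longleftrightarrow> p \<circ> p = p \<and> adj p = p"

definition range_proj :: "('a::chilbert \<Rightarrow> 'a) set \<Rightarrow> ('a \<Rightarrow> 'a) \<Rightarrow> ('a \<Rightarrow> 'a)" where
  "range_proj M x = (THE p. p \<in> M \<and> is_proj p \<and> p \<circ> x = x
      \<and> (\<forall>q\<in>M. is_proj q \<and> q \<circ> x = x \<longrightarrow> op_le p q))"

definition supp_proj :: "('a::chilbert \<Rightarrow> 'a) set \<Rightarrow> ('a \<Rightarrow> 'a) \<Rightarrow> ('a \<Rightarrow> 'a)" where
  "supp_proj M a = op_sub id (range_proj M (op_sub id a))"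

definition null_proj :: "('a::chilbert \<Rightarrow> 'a) set \<Rightarrow> ('a \<Rightarrow> 'a) \<Rightarrow> ('a \<Rightarrow> 'a)" where
  "null_proj M a = op_sub id (range_proj M a)"

definition effect :: "('a::chilbert \<Rightarrow> 'a) \<Rightarrow> bool" where
  "effect a \<longleftrightarrow> positive_op a \<and> op_le a id"

definition abs_compatible :: "('a::chilbert \<Rightarrow> 'a) \<Rightarrow> ('a \<Rightarrow> 'a) \<Rightarrow> bool" where
  "abs_compatible a b \<longleftrightarrow>
     op_add (abs_op (op_sub a b)) (abs_op (op_sub (op_sub id a) b)) = id"

definition strict :: "('a::chilbert \<Rightarrow> 'a) set \<Rightarrow> ('a \<Rightarrow> 'a) \<Rightarrow> bool" where
  "strict M a \<longleftrightarrow> effect a \<and> a \<noteq> op_zero \<and> supp_proj M a = op_zero \<and> null_proj M a = op_zero"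

end

theory Submission
  imports Defs
begin

(* Strictness says that a and 1 - a both have range projection 1. The range projection in M of a
   self-adjoint c in M is the projection onto the closure of its range, i.e. 1 minus the projection
   onto ker c (the latter commutes with the commutant, so it lies in M); hence a and 1 - a are
   injective. For b commuting with a, absolute compatibility can be solved for b algebraically and
   yields a (1 - a) (b - b^2) = 0, so b is a projection, and a strict b is never a projection.
   In (iv), x* a^2 x = x* x says that a preserves the norm on the range of x; for 0 <= a <= 1 this
   forces a to fix that range, so x = 0 by injectivity of 1 - a. The absolute values in the
   definition of absolute compatibility exist because positive operators have commuting positive
   square roots, obtained as limits of a monotone operator iteration. *)

interpretation cm: module "scaleC :: complex \<Rightarrow> 'a::chilbert \<Rightarrow> 'a"
  by standard (simp_all add: scaleC_add_right scaleC_add_left scaleC_scaleC scaleC_one)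

section \<open>Inner product spaces\<close>

lemma cinner_add_left: "cinner (x + y) (z::'a::chilbert) = cinner x z + cinner y z"
proof -
  have "cinner (x + y) z = cnj (cinner z (x + y))" by (rule cinner_commute)
  also have "\<dots> = cnj (cinner z x) + cnj (cinner z y)" by (simp add: cinner_add_right)
  also have "\<dots> = cinner x z + cinner y z"
    by (simp add: cinner_commute[of x z] cinner_commute[of y z])
  finally show ?thesis .
qed

lemma cinner_scaleC_left: "cinner (scaleC c x) (y::'a::chilbert) = cnj c * cinner x y"
proof -
  have "cinner (scaleC c x) y = cnj (cinner y (scaleC c x))" by (rule cinner_commute)
  also have "\<dots> = cnj c * cnj (cinner y x)" by (simp add: cinner_scaleC_right)
  also have "\<dots> = cnj c * cinner x y" by (simp add: cinner_commute[of x y])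
  finally show ?thesis .
qed

lemma cinner_zero_right[simp]: "cinner x (0::'a::chilbert) = 0"
proof -
  have "cinner x (0::'a) = cinner x (scaleC 0 0)" by simp
  also have "\<dots> = 0" by (simp only: cinner_scaleC_right mult_zero_left)
  finally show ?thesis .
qed

lemma cinner_zero_left[simp]: "cinner (0::'a::chilbert) x = 0"
  by (simp add: cinner_commute[of 0 x])

lemma cinner_minus_right: "cinner x (- y::'a::chilbert) = - cinner x y"
proof -
  have "cinner x (- y) + cinner x y = 0" by (simp flip: cinner_add_right)
  then show ?thesis by (simp add: eq_neg_iff_add_eq_0)
qed

lemma cinner_minus_left: "cinner (- x) (y::'a::chilbert) = - cinner x y"
proof -
  have "cinner (- x) y + cinner x y = 0" by (simp flip: cinner_add_left)
  then show ?thesis by (simp add: eq_neg_iff_add_eq_0)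
qed

lemma cinner_diff_right: "cinner x (y - z::'a::chilbert) = cinner x y - cinner x z"
  by (simp only: diff_conv_add_uminus cinner_add_right cinner_minus_right)

lemma cinner_diff_left: "cinner (x - y) (z::'a::chilbert) = cinner x z - cinner y z"
  by (simp only: diff_conv_add_uminus cinner_add_left cinner_minus_left)

lemmas cinner_simps = cinner_add_left cinner_add_right cinner_diff_left cinner_diff_right
  cinner_minus_left cinner_minus_right cinner_scaleC_left cinner_scaleC_right

lemma cinner_self_real: "cinner x (x::'a::chilbert) = complex_of_real (Re (cinner x x))"
  using cinner_self_nonneg[of x] by (simp add: complex_eq_iff)

lemma cinner_self_ge0: "0 \<le> Re (cinner x (x::'a::chilbert))"
  using cinner_self_nonneg by blast

lemma cinner_self_Im: "Im (cinner x (x::'a::chilbert)) = 0"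
  using cinner_self_nonneg by blast

lemma cnorm_power2: "cnorm x ^ 2 = Re (cinner x (x::'a::chilbert))"
  by (simp add: cnorm_def cinner_self_ge0)

lemma cnorm_nonneg: "0 \<le> cnorm (x::'a::chilbert)"
  by (simp add: cnorm_def cinner_self_ge0)

lemma cnorm_zero_iff: "cnorm (x::'a::chilbert) = 0 \<longleftrightarrow> x = 0"
proof -
  have "cnorm x = 0 \<longleftrightarrow> Re (cinner x x) = 0" by (simp add: cnorm_def)
  also have "\<dots> \<longleftrightarrow> cinner x x = 0" using cinner_self_real[of x] by (auto simp: complex_eq_iff)
  finally show ?thesis using cinner_self_eq_zero by blast
qed

lemma cnorm_zero[simp]: "cnorm (0::'a::chilbert) = 0"
  using cnorm_zero_iff by blast

lemma add_self_cancel: "(y::'a::chilbert) + y = z + z \<Longrightarrow> y = z"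
proof -
  assume h: "y + y = z + z"
  have "y = scaleC (1/2) (y + y)"
    by (simp add: cm.scale_right_distrib cm.scale_left_distrib[symmetric])
  also have "\<dots> = scaleC (1/2) (z + z)" using h by simp
  also have "\<dots> = z" by (simp add: cm.scale_right_distrib cm.scale_left_distrib[symmetric])
  finally show ?thesis .
qed

lemma real_quadratic_nonneg_imp_le:
  fixes A K C :: real
  assumes "\<And>s. 0 \<le> A - 2 * s * K + s^2 * K * C" "0 \<le> K" "0 \<le> C" "0 \<le> A"
  shows "K \<le> A * C"
proof (cases "C = 0")
  case True
  show ?thesis
  proof (rule ccontr)
    assume "\<not> K \<le> A * C"
    then have K: "K > 0" using True by simp
    have "0 \<le> A - 2 * ((A+1)/K) * K" using assms(1)[of "(A+1)/K"] True by simp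
    also have "\<dots> = A - 2 * (A + 1)" using K by simp
    finally show False using assms(4) by simp
  qed
next
  case False
  then have C: "C > 0" using assms by simp
  have "0 \<le> A - 2 * (1/C) * K + (1/C)^2 * K * C" using assms(1) by blast
  also have "\<dots> = A - K / C" using C by (simp add: power2_eq_square field_simps)
  finally show ?thesis using C by (simp add: field_simps)
qed

lemma self_mult_le_imp_le: fixes a b :: real shows "0 \<le> a \<Longrightarrow> 0 \<le> b \<Longrightarrow> a * a \<le> a * b \<Longrightarrow> a \<le> b"
proof (rule ccontr)
  assume "0 \<le> a" "0 \<le> b" "a * a \<le> a * b" "\<not> a \<le> b"
  then have "a * b < a * a" by (intro mult_strict_left_mono) auto
  then show False using \<open>a * a \<le> a * b\<close> by simp
qed

lemma real_squeeze_zero: "(\<And>n. 0 \<le> f n) \<Longrightarrow> (\<And>n. f n \<le> g n) \<Longrightarrow> g \<longlonglongrightarrow> 0 \<Longrightarrow> (f :: nat \<Rightarrow> real) \<longlonglongrightarrow> 0"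
  by (rule tendsto_sandwich[where f="\<lambda>_. 0" and g=f and h=g]) auto

context
  fixes B :: "'a::chilbert \<Rightarrow> 'a \<Rightarrow> complex"
  assumes add: "\<And>x y z. B x (y + z) = B x y + B x z"
    and sc: "\<And>x y c. B x (scaleC c y) = c * B x y"
    and herm: "\<And>x y. B y x = cnj (B x y)"
begin

lemma hermitian_form_diff_scaleC:
  "Re (B (x - scaleC (complex_of_real s * cnj (B x y)) y) (x - scaleC (complex_of_real s * cnj (B x y)) y))
     = Re (B x x) - 2 * s * (cmod (B x y))^2 + s^2 * (cmod (B x y))^2 * Re (B y y)"
proof -
  have addl: "B (x + y) z = B x z + B y z" for x y z
    by (metis add complex_cnj_add herm)
  have scl: "B (scaleC c x) y = cnj c * B x y" for c x y
    by (metis complex_cnj_mult herm sc)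
  have real: "B v v = complex_of_real (Re (B v v))" for v
    by (metis herm Reals_cnj_iff of_real_Re)
  have diffr: "B u (v - w) = B u v - B u w" for u v w
    by (metis add add_diff_cancel_right' diff_add_cancel)
  have diffl: "B (v - w) u = B v u - B w u" for u v w
    by (metis addl add_diff_cancel_right' diff_add_cancel)
  define \<beta> where "\<beta> = B x y"
  define K where "K = (cmod \<beta>)^2"
  define t where "t = complex_of_real s * cnj \<beta>"
  have bb: "\<beta> * cnj \<beta> = complex_of_real K" unfolding K_def
    by (metis complex_norm_square of_real_power)
  have e1: "B (x - scaleC t y) (x - scaleC t y) = B x x - t * \<beta> - cnj t * cnj \<beta> + cnj t * t * B y y"
    unfolding \<beta>_def herm[of y x, symmetric]
      by (simp only: diffr diffl sc scl) (simp add: algebra_simps)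
  have e2: "t * \<beta> = complex_of_real (s * K)" "cnj t * cnj \<beta> = complex_of_real (s * K)"
    unfolding t_def using bb by (simp_all add: mult.commute mult.left_commute)
  have e4: "cnj t * t = complex_of_real (s^2 * K)" unfolding t_def
    using bb by (simp add: power2_eq_square mult.commute mult.left_commute)
  have "B (x - scaleC t y) (x - scaleC t y) = complex_of_real (Re (B x x) - 2 * s * K + s^2 * K * Re (B y y))"
    unfolding e1 e2 e4 by (subst real[of x], subst real[of y]) simp
  then show ?thesis unfolding t_def \<beta>_def K_def by simp
qed

lemma hermitian_form_Cauchy_Schwarz:
  assumes pos: "\<And>x. 0 \<le> Re (B x x)"
  shows "(cmod (B x y))^2 \<le> Re (B x x) * Re (B y y)"
  using hermitian_form_diff_scaleC[of x _ y, symmetric] pos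
  by (intro real_quadratic_nonneg_imp_le) (metis, simp_all add: pos)

end

lemma cinner_Cauchy_Schwarz: "(cmod (cinner x y))^2 \<le> Re (cinner x x) * Re (cinner y (y::'a::chilbert))"
  by (rule hermitian_form_Cauchy_Schwarz) (auto simp: cinner_add_right cinner_scaleC_right cinner_self_ge0
      intro: cinner_commute)

lemma Re_cinner_self_diff_scaleC:
  fixes u w :: "'a::chilbert"
  shows "Re (cinner (u - scaleC (complex_of_real s * cinner w u) w)
      (u - scaleC (complex_of_real s * cinner w u) w))
     = Re (cinner u u) - 2 * s * (cmod (cinner w u))^2 + s^2 * (cmod (cinner w u))^2 * Re (cinner w w)"
proof -
  have "cnj (cinner u w) = cinner w u" by (metis cinner_commute)
  moreover have "cmod (cinner u w) = cmod (cinner w u)" by (metis cinner_commute complex_mod_cnj)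
  ultimately show ?thesis
    using hermitian_form_diff_scaleC[OF cinner_add_right cinner_scaleC_right cinner_commute, of u s w] by simp
qed

lemma cmod_cinner_le: "cmod (cinner x y) \<le> cnorm x * cnorm (y::'a::chilbert)"
proof -
  have "(cmod (cinner x y))^2 \<le> (cnorm x * cnorm y)^2"
    using cinner_Cauchy_Schwarz[of x y] by (simp add: power_mult_distrib cnorm_power2)
  then show ?thesis by (meson cnorm_nonneg mult_nonneg_nonneg power2_le_imp_le)
qed

lemma Re_cinner_commute: "Re (cinner y x) = Re (cinner x (y::'a::chilbert))"
  by (subst cinner_commute) simp

lemma Re_cinner_self_add: "Re (cinner (x + y) (x + y)) = Re (cinner x x) + 2 * Re (cinner x y)
    + Re (cinner y (y::'a::chilbert))"
  by (simp add: cinner_add_left cinner_add_right Re_cinner_commute[of y x])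

lemma Re_cinner_self_diff: "Re (cinner (x - y) (x - y)) = Re (cinner x x) - 2 * Re (cinner x y)
    + Re (cinner y (y::'a::chilbert))"
  by (simp add: cinner_diff_left cinner_diff_right Re_cinner_commute[of y x])

lemma parallelogram_law: "Re (cinner (x + y) (x + y)) + Re (cinner (x - y) (x - y))
    = 2 * Re (cinner x x) + 2 * Re (cinner y (y::'a::chilbert))"
  by (simp add: Re_cinner_self_add Re_cinner_self_diff)

lemma Re_cinner_self_scaleC: "Re (cinner (scaleC c x) (scaleC c x))
    = (cmod c)^2 * Re (cinner x (x::'a::chilbert))"
proof -
  have "cinner (scaleC c x) (scaleC c x) = (cnj c * c) * cinner x x"
    by (simp add: cinner_scaleC_left cinner_scaleC_right)
  also have "cnj c * c = complex_of_real ((cmod c)^2)"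
    by (metis complex_norm_square mult.commute of_real_power)
  finally show ?thesis by simp
qed

lemma cnorm_scaleC: "cnorm (scaleC c x) = cmod c * cnorm (x::'a::chilbert)"
  unfolding cnorm_def Re_cinner_self_scaleC by (simp add: real_sqrt_mult)

lemma cnorm_minus: "cnorm (- x) = cnorm (x::'a::chilbert)"
  unfolding cnorm_def by (simp add: cinner_minus_left cinner_minus_right)

lemma cnorm_minus_commute: "cnorm (x - y) = cnorm (y - (x::'a::chilbert))"
  by (metis cnorm_minus minus_diff_eq)

lemma cnorm_triangle: "cnorm (x + y) \<le> cnorm x + cnorm (y::'a::chilbert)"
proof -
  have "Re (cinner x y) \<le> cnorm x * cnorm y"
    using cmod_cinner_le[of x y] complex_Re_le_cmod order_trans by blast
  then have "(cnorm (x + y))^2 \<le> (cnorm x + cnorm y)^2"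
    by (simp add: cnorm_power2 Re_cinner_self_add power2_sum)
  then show ?thesis using cnorm_nonneg by (meson add_nonneg_nonneg power2_le_imp_le)
qed

lemma cnorm_triangle_diff: "cnorm (x - z) \<le> cnorm (x - y) + cnorm (y - (z::'a::chilbert))"
  by (metis cnorm_triangle diff_add_cancel add_diff_eq diff_diff_eq2)

lemma cnorm_rev_triangle: "\<bar>cnorm x - cnorm y\<bar> \<le> cnorm (x - (y::'a::chilbert))"
proof -
  have "cnorm x \<le> cnorm (x - y) + cnorm y" by (metis cnorm_triangle diff_add_cancel)
  moreover have "cnorm y \<le> cnorm (x - y) + cnorm x"
    by (metis cnorm_triangle diff_add_cancel cnorm_minus_commute)
  ultimately show ?thesis by linarith
qed

definition norm_conv :: "(nat \<Rightarrow> 'a::chilbert) \<Rightarrow> 'a \<Rightarrow> bool" where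
  "norm_conv X L \<longleftrightarrow> (\<lambda>n. cnorm (X n - L)) \<longlonglongrightarrow> 0"

lemma norm_conv_Cauchy:
  fixes X :: "nat \<Rightarrow> 'a::chilbert"
  assumes "\<And>e. e > 0 \<Longrightarrow> \<exists>N. \<forall>m\<ge>N. \<forall>n\<ge>N. cnorm (X m - X n) < e"
  shows "\<exists>L. norm_conv X L"
proof -
  from complete[of X] assms obtain L where L: "\<forall>e>0. \<exists>N::nat. \<forall>n\<ge>N. cnorm (X n - L) < e"
    unfolding cnorm_def by blast
  have "(\<lambda>n. cnorm (X n - L)) \<longlonglongrightarrow> 0"
    unfolding lim_sequentially dist_real_def using L by (simp add: abs_of_nonneg[OF cnorm_nonneg])
  then show ?thesis unfolding norm_conv_def by blast
qed

lemma norm_conv_cinner: assumes "norm_conv X L" shows "(\<lambda>n. cinner w (X n)) \<longlonglongrightarrow> cinner w (L::'a::chilbert)"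
proof -
  have "(\<lambda>n. cnorm w * cnorm (X n - L)) \<longlonglongrightarrow> cnorm w * 0"
    using assms unfolding norm_conv_def by (intro tendsto_intros)
  then have "(\<lambda>n. cnorm w * cnorm (X n - L)) \<longlonglongrightarrow> 0" by simp
  moreover have "norm (cinner w (X n) - cinner w L) \<le> cnorm w * cnorm (X n - L)" for n
    using cmod_cinner_le[of w "X n - L"] by (simp add: cinner_diff_right)
  ultimately show ?thesis
    by (subst LIM_zero_iff[symmetric]) (rule tendsto_0_le[where K=1],
       auto intro!: always_eventually simp: abs_of_nonneg cnorm_nonneg)
qed

lemma norm_conv_cnorm: assumes "norm_conv X L" shows "(\<lambda>n. cnorm (X n)) \<longlonglongrightarrow> cnorm (L::'a::chilbert)"
proof -
  have "\<bar>cnorm (X n) - cnorm L\<bar> \<le> cnorm (X n - L)" for n by (rule cnorm_rev_triangle)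
  then show ?thesis using assms unfolding norm_conv_def
    by (subst LIM_zero_iff[symmetric]) (rule tendsto_0_le[where K=1],
       auto intro!: always_eventually simp: abs_of_nonneg cnorm_nonneg)
qed

lemma norm_conv_unique: assumes "norm_conv X L" "norm_conv X L'" shows "L = (L'::'a::chilbert)"
proof -
  have "cnorm (L - L') \<le> cnorm (X n - L) + cnorm (X n - L')" for n
    by (metis cnorm_triangle_diff cnorm_minus_commute)
  moreover have "(\<lambda>n. cnorm (X n - L) + cnorm (X n - L')) \<longlonglongrightarrow> 0 + 0"
    using assms unfolding norm_conv_def by (intro tendsto_intros)
  ultimately have "cnorm (L - L') \<le> 0"
    by (intro LIMSEQ_le[OF tendsto_const]) auto
  then show ?thesis using cnorm_nonneg cnorm_zero_iff by (metis antisym eq_iff_diff_eq_0)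
qed

lemma norm_conv_add: "norm_conv X L \<Longrightarrow> norm_conv Z L' \<Longrightarrow> norm_conv (\<lambda>n. X n + Z n) (L + (L'::'a::chilbert))"
  unfolding norm_conv_def
proof -
  assume a: "(\<lambda>n. cnorm (X n - L)) \<longlonglongrightarrow> 0" "(\<lambda>n. cnorm (Z n - L')) \<longlonglongrightarrow> 0"
  have "cnorm (X n + Z n - (L + L')) \<le> cnorm (X n - L) + cnorm (Z n - L')" for n
  proof -
    have "X n + Z n - (L + L') = (X n - L) + (Z n - L')" by simp
    then show ?thesis using cnorm_triangle by metis
  qed
  moreover have "(\<lambda>n. cnorm (X n - L) + cnorm (Z n - L')) \<longlonglongrightarrow> 0 + 0" using a by (intro tendsto_intros)
  ultimately show "(\<lambda>n. cnorm (X n + Z n - (L + L'))) \<longlonglongrightarrow> 0"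
    by (intro real_squeeze_zero[OF cnorm_nonneg]) auto
qed

lemma norm_conv_scaleC: "norm_conv X L \<Longrightarrow> norm_conv (\<lambda>n. scaleC c (X n)) (scaleC c (L::'a::chilbert))"
  unfolding norm_conv_def
proof -
  assume a: "(\<lambda>n. cnorm (X n - L)) \<longlonglongrightarrow> 0"
  have "cnorm (scaleC c (X n) - scaleC c L) = cmod c * cnorm (X n - L)" for n
    by (simp add: cm.scale_right_diff_distrib[symmetric] cnorm_scaleC)
  moreover have "(\<lambda>n. cmod c * cnorm (X n - L)) \<longlonglongrightarrow> cmod c * 0" using a by (intro tendsto_intros)
  ultimately show "(\<lambda>n. cnorm (scaleC c (X n) - scaleC c L)) \<longlonglongrightarrow> 0" by simp
qed

lemma norm_conv_const: "norm_conv (\<lambda>n. L) (L::'a::chilbert)"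
  unfolding norm_conv_def by simp

lemma norm_conv_Suc: "norm_conv X L \<Longrightarrow> norm_conv (\<lambda>n. X (Suc n)) (L::'a::chilbert)"
  unfolding norm_conv_def by (rule LIMSEQ_Suc)

lemma norm_conv_cnorm_le: "norm_conv X L \<Longrightarrow> (\<And>n. cnorm (X n) \<le> B) \<Longrightarrow> cnorm (L::'a::chilbert) \<le> B"
  using norm_conv_cnorm by (metis LIMSEQ_le_const2)

definition csubspace :: "'a::chilbert set \<Rightarrow> bool" where
  "csubspace K \<longleftrightarrow> 0 \<in> K \<and> (\<forall>x\<in>K. \<forall>y\<in>K. x + y \<in> K) \<and> (\<forall>c. \<forall>x\<in>K. scaleC c x \<in> K)"

definition cclosed :: "'a::chilbert set \<Rightarrow> bool" where
  "cclosed K \<longleftrightarrow> (\<forall>X L. (\<forall>n. X n \<in> K) \<and> norm_conv X L \<longrightarrow> L \<in> K)"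

lemma csubspace_add: "csubspace K \<Longrightarrow> x \<in> K \<Longrightarrow> y \<in> K \<Longrightarrow> x + y \<in> K"
  unfolding csubspace_def by blast

lemma csubspace_scaleC: "csubspace K \<Longrightarrow> x \<in> K \<Longrightarrow> scaleC c x \<in> K"
  unfolding csubspace_def by blast

section \<open>Orthogonal projection onto a closed subspace\<close>

lemma minimizing_seq_Cauchy:
  fixes K :: "'a::chilbert set" and v :: 'a
  assumes K: "csubspace K" and ks: "\<And>n. ks n \<in> K"
    and inf: "\<And>w. w \<in> K \<Longrightarrow> D \<le> Re (cinner (v - w) (v - w))"
    and approx: "\<And>n. Re (cinner (v - ks n) (v - ks n)) < D + 1 / real (Suc n)"
    and e: "e > 0"
  shows "\<exists>N. \<forall>m\<ge>N. \<forall>n\<ge>N. cnorm (ks m - ks n) < e"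
proof -
  \<comment> \<open>The parallelogram law at the midpoint of two almost minimizers.\<close>
  have par: "Re (cinner (ks m - ks n) (ks m - ks n)) \<le> 2 / real (Suc n) + 2 / real (Suc m)" for m n
  proof -
    define x where "x = v - ks n"
    define y where "y = v - ks m"
    have xy: "x + y = scaleC 2 (v - scaleC (1/2) (ks n + ks m))"
      unfolding x_def y_def
      by (simp add: cm.scale_right_diff_distrib cm.scale_left_distrib[of 1 1, simplified] algebra_simps)
    have "scaleC (1/2) (ks n + ks m) \<in> K" using K ks by (simp add: csubspace_add csubspace_scaleC)
    then have "Re (cinner (x + y) (x + y)) \<ge> 4 * D"
      unfolding xy Re_cinner_self_scaleC using inf by fastforce
    moreover have eq: "x - y = ks m - ks n" unfolding x_def y_def by simp
    moreover note parallelogram_law[of x y]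
    moreover have "Re (cinner x x) < D + 1 / real (Suc n)" "Re (cinner y y) < D + 1 / real (Suc m)"
      using approx unfolding x_def y_def by auto
    ultimately show ?thesis unfolding eq[symmetric] by linarith
  qed
  obtain N :: nat where "4 / e^2 < real (Suc N)"
    using reals_Archimedean2 by (metis less_Suc_eq of_nat_less_iff order_less_trans)
  then have N: "4 / real (Suc N) < e^2" using e by (simp add: field_simps)
  have "(cnorm (ks m - ks n))^2 < e^2" if "m \<ge> N" "n \<ge> N" for m n
  proof -
    have "2 / real (Suc n) \<le> 2 / real (Suc N)" "2 / real (Suc m) \<le> 2 / real (Suc N)"
      using that by (auto intro!: divide_left_mono)
    then show ?thesis using par[of m n] N unfolding cnorm_power2 by linarith
  qed
  then have "cnorm (ks m - ks n) < e" if "m \<ge> N" "n \<ge> N" for m n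
    using that e power2_less_imp_less by (metis less_le)
  then show ?thesis by blast
qed

lemma closed_csubspace_nearest_point:
  fixes K :: "'a::chilbert set"
  assumes K: "csubspace K" and cl: "cclosed K"
  shows "\<exists>k\<in>K. \<forall>w\<in>K. Re (cinner (v - k) (v - k)) \<le> Re (cinner (v - w) (v - w))"
proof -
  define f where "f k = Re (cinner (v - k) (v - k))" for k
  define D where "D = Inf (f ` K)"
  have K0: "0 \<in> K" using K csubspace_def by blast
  have bdd: "bdd_below (f ` K)"
    unfolding f_def by (rule bdd_belowI[of _ 0]) (auto simp: cinner_self_ge0)
  have Dle: "D \<le> f k" if "k \<in> K" for k unfolding D_def using bdd that by (simp add: cInf_lower)
  have "\<exists>k\<in>K. f k < D + 1 / real (Suc n)" for n
  proof -
    have "Inf (f ` K) < D + 1 / real (Suc n)" unfolding D_def by simp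
    then show ?thesis using K0 by (subst (asm) cInf_less_iff) (auto simp: bdd)
  qed
  then obtain ks where ks: "\<And>n. ks n \<in> K" "\<And>n. f (ks n) < D + 1 / real (Suc n)" by metis
  obtain k where k: "norm_conv ks k"
    using norm_conv_Cauchy minimizing_seq_Cauchy[OF K ks(1) Dle[unfolded f_def] ks(2)[unfolded f_def]]
    by blast
  have kK: "k \<in> K" using cl k ks(1) unfolding cclosed_def by blast
  have "norm_conv (\<lambda>n. v - ks n) (v - k)"
    using k unfolding norm_conv_def by (simp add: cnorm_minus_commute algebra_simps)
  then have "(\<lambda>n. (cnorm (v - ks n))^2) \<longlonglongrightarrow> (cnorm (v - k))^2"
    by (intro tendsto_intros norm_conv_cnorm)
  moreover have "(\<lambda>n. D + 1 / real (Suc n)) \<longlonglongrightarrow> D + 0"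
    by (intro tendsto_intros LIMSEQ_Suc[OF lim_inverse_n'])
  ultimately have "(cnorm (v - k))^2 \<le> D"
    using ks(2) unfolding f_def cnorm_power2 by (intro LIMSEQ_le) (auto intro: less_imp_le)
  then have "f k \<le> f w" if "w \<in> K" for w using Dle[OF that] unfolding f_def cnorm_power2 by linarith
  then show ?thesis using kK unfolding f_def by blast
qed

lemma nearest_point_orthogonal:
  fixes K :: "'a::chilbert set"
  assumes K: "csubspace K" and kK: "k \<in> K" and w: "w \<in> K"
    and near: "\<And>w. w \<in> K \<Longrightarrow> Re (cinner (v - k) (v - k)) \<le> Re (cinner (v - w) (v - w))"
  shows "cinner w (v - k) = 0"
proof -
  define u where "u = v - k"
  define \<gamma> where "\<gamma> = cinner w u"
  have "0 \<le> 0 - 2 * s * (cmod \<gamma>)^2 + s^2 * (cmod \<gamma>)^2 * Re (cinner w w)" for s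
  proof -
    have "k + scaleC (complex_of_real s * \<gamma>) w \<in> K" using K kK w
      by (simp add: csubspace_add csubspace_scaleC)
    moreover have "v - (k + scaleC (complex_of_real s * \<gamma>) w) = u - scaleC (complex_of_real s * \<gamma>) w"
      unfolding u_def by (simp add: algebra_simps)
    ultimately have "Re (cinner u u) \<le>
        Re (cinner (u - scaleC (complex_of_real s * \<gamma>) w) (u - scaleC (complex_of_real s * \<gamma>) w))"
      using near unfolding u_def by metis
    then show ?thesis unfolding \<gamma>_def Re_cinner_self_diff_scaleC by simp
  qed
  then have "(cmod \<gamma>)^2 \<le> 0 * Re (cinner w w)"
    by (intro real_quadratic_nonneg_imp_le) (auto simp: cinner_self_ge0)
  then show ?thesis unfolding \<gamma>_def u_def by simp
qed

lemma closed_csubspace_orthogonal_decomp: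
  fixes K :: "'a::chilbert set"
  assumes "csubspace K" and "cclosed K"
  shows "\<exists>k\<in>K. \<forall>w\<in>K. cinner w (v - k) = 0"
  using closed_csubspace_nearest_point[OF assms] nearest_point_orthogonal[OF assms(1)] by blast

section \<open>Bounded operators and adjoints\<close>

definition linear_op :: "('a::chilbert \<Rightarrow> 'a) \<Rightarrow> bool" where
  "linear_op T \<longleftrightarrow> (\<forall>x y. T (x + y) = T x + T y) \<and> (\<forall>c x. T (scaleC c x) = scaleC c (T x))"

lemma bounded_op_linear: "bounded_op T \<Longrightarrow> linear_op T"
  unfolding bounded_op_def linear_op_def by blast

lemma linear_op_add: "linear_op T \<Longrightarrow> T (x + y) = T x + T y" unfolding linear_op_def by blast

lemma linear_op_scaleC: "linear_op T \<Longrightarrow> T (scaleC c x) = scaleC c (T x)"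
  unfolding linear_op_def by blast

lemma linear_op_zero: "linear_op T \<Longrightarrow> T 0 = 0"
  by (metis add_cancel_right_right linear_op_add)

lemma linear_op_minus: "linear_op T \<Longrightarrow> T (- x) = - T x"
  by (metis add_eq_0_iff linear_op_add linear_op_zero add.right_inverse)

lemma linear_op_diff: "linear_op T \<Longrightarrow> T (x - y) = T x - T y"
  by (simp add: diff_conv_add_uminus linear_op_add linear_op_minus del: add_uminus_conv_diff)

lemma bounded_op_pos_bound: "bounded_op T \<Longrightarrow> \<exists>K>0. \<forall>x. cnorm (T x) \<le> K * cnorm x"
proof -
  assume "bounded_op T"
  then obtain K where K: "\<forall>x. cnorm (T x) \<le> K * cnorm x" unfolding bounded_op_def by blast
  have "cnorm (T x) \<le> (max K 1) * cnorm x" for x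
    using K[rule_format, of x] cnorm_nonneg[of x] by (smt (verit) mult_right_mono)
  then show ?thesis by (intro exI[of _ "max K 1"]) auto
qed

lemma bounded_opI: "linear_op T \<Longrightarrow> (\<And>x. cnorm (T x) \<le> K * cnorm x) \<Longrightarrow> bounded_op T"
  unfolding bounded_op_def linear_op_def by blast

lemma op_sub_apply: "op_sub A B v = A v - B v" unfolding op_sub_def by simp

lemma op_add_apply: "op_add A B v = A v + B v" unfolding op_add_def by simp

lemma comp_commute_apply: "f \<circ> g = g \<circ> f \<Longrightarrow> f (g x) = g (f x)"
  by (metis comp_apply)

lemma bounded_op_id: "bounded_op (id::'a::chilbert \<Rightarrow> 'a)"
  by (rule bounded_opI[of _ 1]) (auto simp: linear_op_def)

lemma linear_op_op_sub: "linear_op A \<Longrightarrow> linear_op B \<Longrightarrow> linear_op (op_sub A B)"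
  unfolding linear_op_def op_sub_apply by (simp add: cm.scale_right_diff_distrib)

lemma bounded_op_sub: assumes "bounded_op A" "bounded_op B" shows "bounded_op (op_sub A B)"
proof -
  obtain K1 where K1: "\<And>x. cnorm (A x) \<le> K1 * cnorm x" using assms(1) unfolding bounded_op_def
    by blast
  obtain K2 where K2: "\<And>x. cnorm (B x) \<le> K2 * cnorm x" using assms(2) unfolding bounded_op_def
    by blast
  have "cnorm (A x - B x) \<le> (K1 + K2) * cnorm x" for x
  proof -
    have "cnorm (A x - B x) \<le> cnorm (A x) + cnorm (B x)"
      by (metis cnorm_minus cnorm_triangle diff_conv_add_uminus)
    then show ?thesis using K1[of x] K2[of x] by (simp add: algebra_simps)
  qed
  then show ?thesis using assms
    by (intro bounded_opI[OF linear_op_op_sub]) (auto simp: op_sub_apply bounded_op_linear)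
qed

lemma bounded_op_comp:
  assumes "bounded_op A" "bounded_op B" shows "bounded_op (A \<circ> B)"
proof -
  obtain K1 where K1: "K1 > 0" "\<And>x. cnorm (A x) \<le> K1 * cnorm x"
    using bounded_op_pos_bound[OF assms(1)] by blast
  obtain K2 where K2: "\<And>x. cnorm (B x) \<le> K2 * cnorm x" using assms(2) unfolding bounded_op_def
    by blast
  have "cnorm (A (B x)) \<le> (K1 * K2) * cnorm x" for x
    using K1(2)[of "B x"] mult_left_mono[OF K2[of x] less_imp_le[OF K1(1)]]
      by (simp add: mult.assoc)
  moreover have "linear_op (A \<circ> B)"
    using bounded_op_linear[OF assms(1)] bounded_op_linear[OF assms(2)] unfolding linear_op_def
      by simp
  ultimately show ?thesis by (intro bounded_opI) auto
qed

lemma bounded_op_scaleC_op: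
  assumes "bounded_op T" shows "bounded_op (\<lambda>v. scaleC c (T v))"
proof -
  obtain K where K: "\<And>x. cnorm (T x) \<le> K * cnorm x" using assms unfolding bounded_op_def by blast
  have "cnorm (scaleC c (T x)) \<le> (cmod c * K) * cnorm x" for x
    using mult_left_mono[OF K[of x] norm_ge_zero[of c]] by (simp add: cnorm_scaleC mult.assoc)
  moreover have "linear_op (\<lambda>v. scaleC c (T v))"
    using bounded_op_linear[OF assms] unfolding linear_op_def
      by (simp add: cm.scale_right_distrib mult.commute)
  ultimately show ?thesis by (intro bounded_opI) auto
qed

lemma positive_op_scaleR_op:
  "positive_op T \<Longrightarrow> 0 \<le> r \<Longrightarrow> positive_op (\<lambda>v. scaleC (complex_of_real r) (T v))"
  unfolding positive_op_def by (simp add: cinner_scaleC_right)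

lemma op_sub_symmetric: "(\<And>x y. cinner (A x) y = cinner x (A y)) \<Longrightarrow> (\<And>x y. cinner (B x) y = cinner x (B y))
  \<Longrightarrow> cinner (op_sub A B x) y = cinner x (op_sub A B y)"
  by (simp add: op_sub_apply cinner_diff_left cinner_diff_right)

lemma norm_conv_bounded_op: assumes "bounded_op T" "norm_conv X L" shows "norm_conv (\<lambda>n. T (X n)) (T L)"
proof -
  obtain K where K: "K > 0" "\<And>x. cnorm (T x) \<le> K * cnorm x" using bounded_op_pos_bound[OF assms(1)]
    by blast
  have "cnorm (T (X n) - T L) \<le> K * cnorm (X n - L)" for n
    using K(2)[of "X n - L"] by (simp add: linear_op_diff[OF bounded_op_linear[OF assms(1)]])
  moreover have "(\<lambda>n. K * cnorm (X n - L)) \<longlonglongrightarrow> K * 0" using assms(2) unfolding norm_conv_def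
    by (intro tendsto_intros)
  ultimately show ?thesis unfolding norm_conv_def by (intro real_squeeze_zero[OF cnorm_nonneg]) auto
qed

lemma cinner_right_eqI: "(\<And>x. cinner x v = cinner x w) \<Longrightarrow> v = (w::'a::chilbert)"
  by (metis cinner_diff_right cinner_self_eq_zero eq_iff_diff_eq_0)

lemma cclosed_functional_ker:
  fixes f :: "'a::chilbert \<Rightarrow> complex"
  assumes add: "\<And>x y. f (x + y) = f x + f y" and bd: "\<And>x. cmod (f x) \<le> C * cnorm x"
  shows "cclosed {x. f x = 0}"
  unfolding cclosed_def
proof (intro allI impI)
  fix X L assume h: "(\<forall>n. X n \<in> {x. f x = 0}) \<and> norm_conv X L"
  have "cmod (f L) \<le> C * cnorm (X n - L)" for n
  proof -
    have "f L = - f (X n - L)" using h add[of "X n - L" L]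
      by (simp add: eq_neg_iff_add_eq_0 add.commute)
    then show ?thesis using bd[of "X n - L"] by simp
  qed
  moreover have "(\<lambda>n. cnorm (X n - L)) \<longlonglongrightarrow> 0" using h norm_conv_def by blast
  then have "(\<lambda>n. C * cnorm (X n - L)) \<longlonglongrightarrow> C * 0" by (intro tendsto_intros)
  ultimately have "cmod (f L) \<le> C * 0" by (intro LIMSEQ_le[OF tendsto_const]) auto
  then show "L \<in> {x. f x = 0}" by simp
qed

lemma riesz_representation:
  fixes f :: "'a::chilbert \<Rightarrow> complex"
  assumes add: "\<And>x y. f (x + y) = f x + f y" and sc: "\<And>c x. f (scaleC c x) = c * f x"
    and bd: "\<And>x. cmod (f x) \<le> C * cnorm x"
  shows "\<exists>z. \<forall>x. f x = cinner z x"
proof (cases "\<forall>x. f x = 0")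
  case True then show ?thesis by (intro exI[of _ 0]) simp
next
  case False
  then obtain v where v: "f v \<noteq> 0" by blast
  define K where "K = {x. f x = 0}"
  have f0: "f 0 = 0" by (metis add add_cancel_right_right)
  have fminus: "f (x - y) = f x - f y" for x y
    by (metis add diff_add_cancel eq_diff_eq)
  have sub: "csubspace K" unfolding csubspace_def K_def using f0 add sc by auto
  have cl: "cclosed K" unfolding K_def by (rule cclosed_functional_ker[OF add bd])
  obtain k where k: "k \<in> K" "\<forall>w\<in>K. cinner w (v - k) = 0"
    using closed_csubspace_orthogonal_decomp[OF sub cl] by blast
  define u where "u = v - k"
  have fu: "f u = f v" unfolding u_def using k(1) by (simp add: fminus K_def)
  have u0: "u \<noteq> 0" using fu v f0 by auto
  define N where "N = cinner u u"
  have N0: "N \<noteq> 0" unfolding N_def using u0 cinner_self_eq_zero by blast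
  have Nr: "cnj N = N" unfolding N_def by (metis cinner_commute)
  define z where "z = scaleC (cnj (f u) / cnj N) u"
  have "f x = cinner z x" for x
  proof -
    have "x - scaleC (f x / f u) u \<in> K" unfolding K_def using fu v by (simp add: fminus sc)
    then have "cinner (x - scaleC (f x / f u) u) u = 0"
      using k(2) unfolding u_def by (metis cinner_commute complex_cnj_zero)
    then have "cinner x u = cnj (f x / f u) * N" unfolding N_def
      by (simp add: cinner_diff_left cinner_scaleC_left)
    then have "cinner u x = (f x / f u) * cnj N"
      by (metis cinner_commute complex_cnj_cnj complex_cnj_mult)
    then show ?thesis unfolding z_def cinner_scaleC_left using fu v N0 Nr by (simp add: field_simps)
  qed
  then show ?thesis by blast
qed

lemma adj_eqI: "(\<And>x y. cinner (T x) y = cinner x (S y)) \<Longrightarrow> adj T = S"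
  unfolding adj_def
proof (rule the_equality)
  assume "\<And>x y. cinner (T x) y = cinner x (S y)"
  then show "\<forall>x y. cinner (T x) y = cinner x (S y)" by blast
next
  fix S' assume h: "\<And>x y. cinner (T x) y = cinner x (S y)" "\<forall>x y. cinner (T x) y = cinner x (S' y)"
  show "S' = S" by (rule ext, rule cinner_right_eqI) (metis h)
qed

lemma adjoint_exists:
  assumes "bounded_op T" shows "\<exists>S. \<forall>x y. cinner (T x) y = cinner x (S y)"
proof -
  obtain K where K: "K > 0" "\<And>x. cnorm (T x) \<le> K * cnorm x" using bounded_op_pos_bound[OF assms]
    by blast
  have l: "linear_op T" using assms by (rule bounded_op_linear)
  have "\<exists>z. \<forall>x. cinner y (T x) = cinner z x" for y
  proof (rule riesz_representation[where C = "cnorm y * K"])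
    show "cinner y (T (x1 + x2)) = cinner y (T x1) + cinner y (T x2)" for x1 x2
      by (simp add: linear_op_add[OF l] cinner_add_right)
    show "cinner y (T (scaleC c x)) = c * cinner y (T x)" for c x
      by (simp add: linear_op_scaleC[OF l] cinner_scaleC_right)
    show "cmod (cinner y (T x)) \<le> cnorm y * K * cnorm x" for x
      using cmod_cinner_le[of y "T x"] K(2)[of x] cnorm_nonneg[of y]
      by (smt (verit, ccfv_SIG) mult.assoc mult_left_mono)
  qed
  then obtain S where S: "\<And>y x. cinner y (T x) = cinner (S y) x" by metis
  have "cinner (T x) y = cinner x (S y)" for x y by (metis S cinner_commute)
  then show ?thesis by blast
qed

lemma cinner_adj_right: "bounded_op T \<Longrightarrow> cinner (T x) y = cinner x (adj T y)"
  by (metis adj_eqI adjoint_exists)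

lemma cinner_adj_left: "bounded_op T \<Longrightarrow> cinner x (T y) = cinner (adj T x) y"
  by (metis cinner_adj_right cinner_commute)

lemma linear_op_adj: assumes "bounded_op T" shows "linear_op (adj T)"
  unfolding linear_op_def
proof (intro conjI allI)
  show "adj T (x + y) = adj T x + adj T y" for x y
    by (rule cinner_right_eqI) (simp add: cinner_adj_right[OF assms, symmetric] cinner_add_right)
  show "adj T (scaleC c x) = scaleC c (adj T x)" for c x
    by (rule cinner_right_eqI) (simp add: cinner_adj_right[OF assms, symmetric] cinner_scaleC_right)
qed

lemma adj_comp: "bounded_op A \<Longrightarrow> bounded_op B \<Longrightarrow> adj (A \<circ> B) = adj B \<circ> adj A"
  by (rule adj_eqI) (simp add: cinner_adj_right)

lemma adj_eq_self: "(\<And>x y. cinner (T x) y = cinner x (T y)) \<Longrightarrow> adj T = T"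
  by (rule adj_eqI)

lemma polarization_identity:
  assumes l: "linear_op T"
  shows "4 * cinner x (T y) = cinner (x + y) (T (x + y)) - cinner (x - y) (T (x - y))
     - \<i> * (cinner (x + scaleC \<i> y) (T (x + scaleC \<i> y)) - cinner (x - scaleC \<i> y) (T (x - scaleC \<i> y)))"
  by (simp add: linear_op_add[OF l] linear_op_diff[OF l] linear_op_scaleC[OF l] cinner_simps algebra_simps)

lemma quadratic_form_zero_imp_zero:
  assumes l: "linear_op T" and h: "\<And>v. cinner v (T v) = 0"
  shows "T = (\<lambda>_. 0)"
proof
  fix y
  have "4 * cinner (T y) (T y) = 0" using polarization_identity[OF l, of "T y" y] h by simp
  then have "cinner (T y) (T y) = 0" by simp
  then show "T y = 0" using cinner_self_eq_zero by blast
qed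

lemma quadratic_form_scaleC: "linear_op T \<Longrightarrow> cinner (scaleC c v) (T (scaleC c v))
    = (cnj c * c) * cinner v (T v)"
  by (simp add: linear_op_scaleC cinner_scaleC_left cinner_scaleC_right)

lemma real_quadratic_form_imp_symmetric:
  assumes l: "linear_op T" and h: "\<And>v. Im (cinner v (T v)) = 0"
  shows "cinner (T x) y = cinner x (T y)"
proof -
  define q where "q v = cinner v (T v)" for v
  have qr: "cnj (q v) = q v" for v using h[of v] unfolding q_def by (simp add: complex_eq_iff)
  have qm: "q (- v) = q v" for v unfolding q_def
    by (simp add: linear_op_minus[OF l] cinner_minus_left cinner_minus_right)
  have qi: "q (scaleC \<i> v) = q v" for v unfolding q_def quadratic_form_scaleC[OF l] by simp
  have e1: "y + x = x + y" by simp
  have e2: "y - x = - (x - y)" by simp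
  have e3: "y + scaleC \<i> x = scaleC \<i> (x - scaleC \<i> y)"
    by (simp add: cm.scale_right_diff_distrib)
  have e4: "y - scaleC \<i> x = - scaleC \<i> (x + scaleC \<i> y)"
    by (simp add: cm.scale_right_distrib)
  define a where "a = q (x + y) - q (x - y)"
  define b where "b = q (x - scaleC \<i> y) - q (x + scaleC \<i> y)"
  have F1: "4 * cinner y (T x) = q (x + y) - q (x - y) - \<i> * (q (x - scaleC \<i> y) - q (x + scaleC \<i> y))"
    using polarization_identity[OF l, of y x] unfolding q_def[symmetric] e1 e2 e3 e4 qm qi .
  have F2: "4 * cinner x (T y) = q (x + y) - q (x - y) - \<i> * (q (x + scaleC \<i> y) - q (x - scaleC \<i> y))"
    using polarization_identity[OF l, of x y] unfolding q_def[symmetric] .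
  have A: "4 * cinner y (T x) = a - \<i> * b" unfolding F1 a_def b_def by simp
  have B: "4 * cinner x (T y) = a + \<i> * b" unfolding F2 a_def b_def by (simp add: algebra_simps)
  have "cnj a = a" "cnj b = b" unfolding a_def b_def by (simp_all add: qr)
  then have "cnj (4 * cinner x (T y)) = a - \<i> * b" unfolding B by simp
  then have "4 * cinner y (T x) = 4 * cnj (cinner x (T y))" using A by simp
  then have "cinner y (T x) = cnj (cinner x (T y))" by simp
  then show ?thesis by (metis cinner_commute)
qed

lemma positive_op_Im: "positive_op T \<Longrightarrow> Im (cinner v (T v)) = 0" unfolding positive_op_def by blast

lemma positive_op_Re: "positive_op T \<Longrightarrow> 0 \<le> Re (cinner v (T v))" unfolding positive_op_def by blast

lemma positive_op_symmetric: "linear_op T \<Longrightarrow> positive_op T \<Longrightarrow> cinner (T x) y = cinner x (T y)"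
  using real_quadratic_form_imp_symmetric positive_op_Im by blast

lemma symmetric_op_Im_zero: "(\<And>x y. cinner (T x) y = cinner x (T y)) \<Longrightarrow> Im (cinner v (T v)) = 0"
  by (metis cinner_commute Reals_cnj_iff complex_is_Real_iff)

lemma positive_op_Cauchy_Schwarz:
  assumes l: "linear_op T" and p: "positive_op T"
  shows "(cmod (cinner x (T y)))^2 \<le> Re (cinner x (T x)) * Re (cinner y (T y))"
proof (rule hermitian_form_Cauchy_Schwarz[where B = "\<lambda>x y. cinner x (T y)"])
  show "cinner x (T (y + z)) = cinner x (T y) + cinner x (T z)" for x y z
    by (simp add: linear_op_add[OF l] cinner_add_right)
  show "cinner x (T (scaleC c y)) = c * cinner x (T y)" for x y c
    by (simp add: linear_op_scaleC[OF l] cinner_scaleC_right)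
  show "cinner y (T x) = cnj (cinner x (T y))" for x y
    by (metis positive_op_symmetric[OF l p] cinner_commute)
  show "0 \<le> Re (cinner x (T x))" for x using positive_op_Re[OF p] .
qed

lemma positive_op_quadratic_zero:
  assumes l: "linear_op T" and p: "positive_op T" and h: "Re (cinner v (T v)) = 0"
  shows "T v = 0"
proof -
  have "(cmod (cinner (T v) (T v)))^2 \<le> 0" using positive_op_Cauchy_Schwarz[OF l p, of "T v" v] h
    by simp
  then have "cinner (T v) (T v) = 0" by simp
  then show ?thesis using cinner_self_eq_zero by blast
qed

lemma positive_contraction_square_le:
  assumes l: "linear_op Y" and p: "positive_op Y" and le: "\<And>v. Re (cinner v (Y v)) \<le> Re (cinner v v)"
  shows "Re (cinner (Y v) (Y v)) \<le> Re (cinner v (Y v))"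
proof -
  define n where "n = Re (cinner (Y v) (Y v))"
  define r where "r = Re (cinner v (Y v))"
  have n0: "0 \<le> n" unfolding n_def by (rule cinner_self_ge0)
  have "cmod (cinner (Y v) (Y v)) = n" unfolding n_def
    by (subst cinner_self_real) (simp add: cinner_self_ge0)
  then have "n^2 \<le> Re (cinner (Y v) (Y (Y v))) * r"
    using positive_op_Cauchy_Schwarz[OF l p, of "Y v" v] unfolding r_def by simp
  also have "\<dots> \<le> n * r" unfolding n_def r_def
    using le[of "Y v"] positive_op_Re[OF p, of v] by (simp add: mult_right_mono)
  finally have "n * n \<le> n * r" by (simp add: power2_eq_square)
  then show ?thesis using n0 positive_op_Re[OF p, of v] self_mult_le_imp_le
    unfolding n_def[symmetric] r_def[symmetric]
    by blast
qed

section \<open>Projection onto a kernel\<close>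

definition ker_proj :: "('a::chilbert \<Rightarrow> 'a) \<Rightarrow> 'a \<Rightarrow> 'a" where
  "ker_proj c v = (SOME k. c k = 0 \<and> (\<forall>w. c w = 0 \<longrightarrow> cinner w (v - k) = 0))"

context
  fixes c :: "'a::chilbert \<Rightarrow> 'a"
  assumes cb: "bounded_op c"
begin

lemma csubspace_ker: "csubspace {v. c v = 0}"
  using bounded_op_linear[OF cb] unfolding csubspace_def
    by (auto simp: linear_op_zero linear_op_add linear_op_scaleC)

lemma cclosed_ker: "cclosed {v. c v = 0}"
  unfolding cclosed_def
proof (intro allI impI)
  fix X L assume h: "(\<forall>n. X n \<in> {v. c v = 0}) \<and> norm_conv X L"
  obtain K where K: "K > 0" "\<And>x. cnorm (c x) \<le> K * cnorm x" using bounded_op_pos_bound[OF cb]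
    by blast
  have "cnorm (c L) \<le> K * cnorm (X n - L)" for n
  proof -
    have "c L = - c (X n - L)" using h by (simp add: linear_op_diff[OF bounded_op_linear[OF cb]])
    then show ?thesis using K(2)[of "X n - L"] by (simp add: cnorm_minus)
  qed
  moreover have "(\<lambda>n. cnorm (X n - L)) \<longlonglongrightarrow> 0" using h norm_conv_def by blast
  then have "(\<lambda>n. K * cnorm (X n - L)) \<longlonglongrightarrow> K * 0" by (intro tendsto_intros)
  ultimately have "cnorm (c L) \<le> K * 0" by (intro LIMSEQ_le[OF tendsto_const]) auto
  then have "cnorm (c L) = 0" using cnorm_nonneg[of "c L"] by simp
  then show "L \<in> {v. c v = 0}" by (simp add: cnorm_zero_iff)
qed

lemma ker_proj_spec: "c (ker_proj c v) = 0 \<and> (\<forall>w. c w = 0 \<longrightarrow> cinner w (v - ker_proj c v) = 0)"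
proof -
  obtain k where "k \<in> {v. c v = 0}" "\<forall>w\<in>{v. c v = 0}. cinner w (v - k) = 0"
    using closed_csubspace_orthogonal_decomp[OF csubspace_ker cclosed_ker] by blast
  then have "\<exists>k. c k = 0 \<and> (\<forall>w. c w = 0 \<longrightarrow> cinner w (v - k) = 0)" by auto
  then show ?thesis unfolding ker_proj_def by (rule someI_ex)
qed

lemma ker_proj_in_ker: "c (ker_proj c v) = 0" using ker_proj_spec by blast

lemma ker_proj_orthogonal: "c w = 0 \<Longrightarrow> cinner w (v - ker_proj c v) = 0" using ker_proj_spec by blast

lemma ker_proj_unique:
  assumes "c k = 0" "\<And>w. c w = 0 \<Longrightarrow> cinner w (v - k) = 0"
  shows "ker_proj c v = k"
proof -
  define d where "d = k - ker_proj c v"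
  have cd: "c d = 0" unfolding d_def using assms(1) ker_proj_in_ker
    by (simp add: linear_op_diff[OF bounded_op_linear[OF cb]])
  have "cinner d d = cinner d (v - ker_proj c v) - cinner d (v - k)" unfolding d_def
    by (simp add: cinner_diff_right)
  also have "\<dots> = 0" using ker_proj_orthogonal[OF cd] assms(2)[OF cd] by simp
  finally have "d = 0" using cinner_self_eq_zero by blast
  then show ?thesis unfolding d_def by simp
qed

lemma linear_op_ker_proj: "linear_op (ker_proj c)"
  unfolding linear_op_def
proof (intro conjI allI)
  have l: "linear_op c" using bounded_op_linear[OF cb] .
  show "ker_proj c (x + y) = ker_proj c x + ker_proj c y" for x y
  proof (rule ker_proj_unique)
    show "c (ker_proj c x + ker_proj c y) = 0" by (simp add: linear_op_add[OF l] ker_proj_in_ker)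
    show "cinner w (x + y - (ker_proj c x + ker_proj c y)) = 0" if "c w = 0" for w
    proof -
      have eq: "x + y - (ker_proj c x + ker_proj c y) = (x - ker_proj c x) + (y - ker_proj c y)"
        by simp
      show ?thesis unfolding eq cinner_add_right
        using ker_proj_orthogonal[OF that, of x] ker_proj_orthogonal[OF that, of y] by simp
    qed
  qed
  show "ker_proj c (scaleC a x) = scaleC a (ker_proj c x)" for a x
  proof (rule ker_proj_unique)
    show "c (scaleC a (ker_proj c x)) = 0" by (simp add: linear_op_scaleC[OF l] ker_proj_in_ker)
    show "cinner w (scaleC a x - scaleC a (ker_proj c x)) = 0" if "c w = 0" for w
    proof -
      have eq: "scaleC a x - scaleC a (ker_proj c x) = scaleC a (x - ker_proj c x)"
        by (simp add: cm.scale_right_diff_distrib)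
      show ?thesis unfolding eq cinner_scaleC_right using ker_proj_orthogonal[OF that, of x] by simp
    qed
  qed
qed

lemma cinner_ker_proj_ker_proj: "cinner (ker_proj c v) w = cinner (ker_proj c v) (ker_proj c w)"
proof -
  have "cinner (ker_proj c v) (w - ker_proj c w) = 0"
    by (rule ker_proj_orthogonal[OF ker_proj_in_ker])
  then show ?thesis by (simp add: cinner_diff_right)
qed

lemma ker_proj_symmetric: "cinner (ker_proj c v) w = cinner v (ker_proj c w)"
proof -
  have "cinner (ker_proj c w) (v - ker_proj c v) = 0"
    by (rule ker_proj_orthogonal[OF ker_proj_in_ker])
  then have "cinner (v - ker_proj c v) (ker_proj c w) = 0" by (subst cinner_commute) simp
  then have "cinner v (ker_proj c w) = cinner (ker_proj c v) (ker_proj c w)"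
    by (simp add: cinner_diff_left)
  then show ?thesis using cinner_ker_proj_ker_proj by simp
qed

lemma ker_proj_fixes_ker: "c v = 0 \<Longrightarrow> ker_proj c v = v"
  by (rule ker_proj_unique) auto

lemma ker_proj_idem: "ker_proj c (ker_proj c v) = ker_proj c v"
  by (rule ker_proj_fixes_ker[OF ker_proj_in_ker])

lemma cnorm_ker_proj_le: "cnorm (ker_proj c v) \<le> cnorm v"
proof -
  have "(cnorm (ker_proj c v))^2 = Re (cinner (ker_proj c v) v)"
    unfolding cnorm_power2 cinner_ker_proj_ker_proj[of v v] ..
  also have "\<dots> \<le> cnorm (ker_proj c v) * cnorm v"
    using cmod_cinner_le[of "ker_proj c v" v] complex_Re_le_cmod[of "cinner (ker_proj c v) v"]
      by linarith
  finally have "cnorm (ker_proj c v) * cnorm (ker_proj c v) \<le> cnorm (ker_proj c v) * cnorm v"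
    by (simp add: power2_eq_square)
  then show ?thesis using cnorm_nonneg[of "ker_proj c v"] cnorm_nonneg[of v] self_mult_le_imp_le
    by blast
qed

lemma bounded_op_ker_proj: "bounded_op (ker_proj c)"
  by (rule bounded_opI[OF linear_op_ker_proj, of 1]) (simp add: cnorm_ker_proj_le)

end

section \<open>Square roots of positive operators\<close>

text \<open>The operators \<open>p(S)\<close> for polynomials \<open>p\<close> with nonnegative coefficients: for positive \<open>S\<close>
  they are positive and commute with everything that commutes with \<open>S\<close>.\<close>
inductive nonneg_poly :: "('a::chilbert \<Rightarrow> 'a) \<Rightarrow> ('a \<Rightarrow> 'a) \<Rightarrow> bool" for S where
  zero: "nonneg_poly S (\<lambda>v. 0)"
| add_pow: "nonneg_poly S A \<Longrightarrow> 0 \<le> c \<Longrightarrow> nonneg_poly S (\<lambda>v. A v + scaleC (complex_of_real c) ((S ^^ k) v))"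

lemma linear_op_funpow: "linear_op S \<Longrightarrow> linear_op (S ^^ k)"
proof (induction k)
  case 0 then show ?case by (simp add: linear_op_def)
next
  case (Suc k) then show ?case unfolding linear_op_def by (simp add: linear_op_add linear_op_scaleC)
qed

lemma funpow_commute: "linear_op W \<Longrightarrow> (\<And>x. W (S x) = S (W x)) \<Longrightarrow> W ((S ^^ k) x) = (S ^^ k) (W x)"
  by (induction k arbitrary: x) auto

lemma funpow_symmetric: "(\<And>x y. cinner (S x) y = cinner x (S y)) \<Longrightarrow> cinner ((S ^^ k) x) y
    = cinner x ((S ^^ k) y)"
proof (induction k arbitrary: x y)
  case 0 then show ?case by simp
next
  case (Suc k)
  have "cinner ((S ^^ Suc k) x) y = cinner ((S ^^ k) x) (S y)" by (simp add: Suc.prems)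
  also have "\<dots> = cinner x ((S ^^ k) (S y))" using Suc by blast
  also have "(S ^^ k) (S y) = (S ^^ Suc k) y" by (simp add: funpow_swap1)
  finally show ?case .
qed

lemma positive_op_funpow:
  assumes l: "linear_op S" and p: "positive_op S"
  shows "positive_op (S ^^ k)"
proof -
  have sy: "cinner (S x) y = cinner x (S y)" for x y using positive_op_symmetric[OF l p] .
  have psy: "cinner ((S ^^ j) x) y = cinner x ((S ^^ j) y)" for j x y
    using funpow_symmetric[OF sy] .
  have "0 \<le> Re (cinner v ((S ^^ k) v))" for v
  proof (cases "even k")
    case True
    then obtain m where k: "k = m + m" by (metis evenE mult_2)
    have "cinner v ((S ^^ k) v) = cinner ((S ^^ m) v) ((S ^^ m) v)"
      unfolding k funpow_add by (simp add: psy)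
    then show ?thesis by (simp add: cinner_self_ge0)
  next
    case False
    then obtain m where k: "k = Suc (m + m)" by (metis oddE mult_2 add.commute plus_1_eq_Suc)
    have "S ^^ k = (S ^^ m) \<circ> (S ^^ Suc m)" unfolding k by (metis add_Suc_right funpow_add)
    then have "(S ^^ k) v = (S ^^ m) (S ((S ^^ m) v))" by simp
    then have "cinner v ((S ^^ k) v) = cinner ((S ^^ m) v) (S ((S ^^ m) v))" by (simp add: psy)
    then show ?thesis using positive_op_Re[OF p] by simp
  qed
  moreover have "Im (cinner v ((S ^^ k) v)) = 0" for v by (rule symmetric_op_Im_zero[OF psy])
  ultimately show ?thesis unfolding positive_op_def by blast
qed

context
  fixes S :: "'a::chilbert \<Rightarrow> 'a"
  assumes Sb: "bounded_op S" and Sp: "positive_op S"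
begin

lemma nonneg_poly_linear_op: "nonneg_poly S A \<Longrightarrow> linear_op A"
proof (induction rule: nonneg_poly.induct)
  case zero then show ?case by (simp add: linear_op_def)
next
  case (add_pow A c k)
  have l: "linear_op (S ^^ k)" using linear_op_funpow[OF bounded_op_linear[OF Sb]] .
  show ?case using add_pow.IH unfolding linear_op_def
    by (simp add: linear_op_add[OF l] linear_op_scaleC[OF l] cm.scale_right_distrib algebra_simps)
qed

lemma nonneg_poly_symmetric: "nonneg_poly S A \<Longrightarrow> cinner (A x) y = cinner x (A y)"
proof (induction arbitrary: x y rule: nonneg_poly.induct)
  case zero then show ?case by simp
next
  case (add_pow A c k)
  have "cinner ((S ^^ k) x) y = cinner x ((S ^^ k) y)"
    by (rule funpow_symmetric[OF positive_op_symmetric[OF bounded_op_linear[OF Sb] Sp]])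
  then show ?case using add_pow.IH
    by (simp add: cinner_add_left cinner_add_right cinner_scaleC_left cinner_scaleC_right)
qed

lemma nonneg_poly_positive_op: "nonneg_poly S A \<Longrightarrow> positive_op A"
proof (induction rule: nonneg_poly.induct)
  case zero then show ?case by (simp add: positive_op_def)
next
  case (add_pow A c k)
  have p: "positive_op (S ^^ k)" by (rule positive_op_funpow[OF bounded_op_linear[OF Sb] Sp])
  show ?case unfolding positive_op_def
  proof
    fix v
    have "cinner v (A v + scaleC (complex_of_real c) ((S ^^ k) v)) = cinner v (A v)
        + complex_of_real c * cinner v ((S ^^ k) v)"
      by (simp add: cinner_add_right cinner_scaleC_right)
    then show "Im (cinner v (A v + scaleC (complex_of_real c) ((S ^^ k) v))) = 0 \<and>
        0 \<le> Re (cinner v (A v + scaleC (complex_of_real c) ((S ^^ k) v)))"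
      using add_pow.IH p add_pow.hyps(2) unfolding positive_op_def by simp
  qed
qed

lemma nonneg_poly_commute: "nonneg_poly S A \<Longrightarrow> linear_op W \<Longrightarrow> (\<And>x. W (S x) = S (W x)) \<Longrightarrow> W (A x) = A (W x)"
proof (induction arbitrary: x rule: nonneg_poly.induct)
  case zero then show ?case by (simp add: linear_op_zero)
next
  case (add_pow A c k)
  then show ?case by (simp add: linear_op_add linear_op_scaleC funpow_commute)
qed

lemma nonneg_poly_commute_nonneg_poly: "nonneg_poly S A \<Longrightarrow> nonneg_poly S B \<Longrightarrow> A (B x) = B (A x)"
proof -
  assume a: "nonneg_poly S A" and b: "nonneg_poly S B"
  have "B (S y) = S (B y)" for y using nonneg_poly_commute[OF b bounded_op_linear[OF Sb]] by metis
  then show ?thesis using nonneg_poly_commute[OF a nonneg_poly_linear_op[OF b]] by metis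
qed

lemma nonneg_poly_add: "nonneg_poly S B \<Longrightarrow> nonneg_poly S A \<Longrightarrow> nonneg_poly S (\<lambda>v. A v + B v)"
proof (induction rule: nonneg_poly.induct)
  case zero then show ?case by simp
next
  case (add_pow B c k)
  have "nonneg_poly S (\<lambda>v. (A v + B v) + scaleC (complex_of_real c) ((S ^^ k) v))"
    using add_pow by (intro nonneg_poly.add_pow) auto
  then show ?case by (simp add: add.assoc)
qed

lemma nonneg_poly_scale: "nonneg_poly S A \<Longrightarrow> 0 \<le> d \<Longrightarrow> nonneg_poly S (\<lambda>v. scaleC (complex_of_real d) (A v))"
proof (induction rule: nonneg_poly.induct)
  case zero then show ?case by (simp add: nonneg_poly.zero)
next
  case (add_pow A c k)
  have "nonneg_poly S (\<lambda>v. scaleC (complex_of_real d) (A v) + scaleC (complex_of_real (d * c)) ((S ^^ k) v))"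
    using add_pow by (intro nonneg_poly.add_pow) auto
  then show ?case by (simp add: cm.scale_right_distrib)
qed

lemma nonneg_poly_funpow: "nonneg_poly S (S ^^ k)"
proof -
  have "nonneg_poly S (\<lambda>v. 0 + scaleC (complex_of_real 1) ((S ^^ k) v))"
    by (intro nonneg_poly.add_pow nonneg_poly.zero) auto
  then show ?thesis by simp
qed

lemma nonneg_poly_self: "nonneg_poly S S" using nonneg_poly_funpow[of 1] by simp

lemma nonneg_poly_comp_funpow: "nonneg_poly S A \<Longrightarrow> nonneg_poly S (\<lambda>v. A ((S ^^ j) v))"
proof (induction rule: nonneg_poly.induct)
  case zero then show ?case by (simp add: nonneg_poly.zero)
next
  case (add_pow A c k)
  have "nonneg_poly S (\<lambda>v. A ((S ^^ j) v) + scaleC (complex_of_real c) ((S ^^ (k + j)) v))"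
    using add_pow by (intro nonneg_poly.add_pow) auto
  then show ?case by (simp add: funpow_add)
qed

lemma nonneg_poly_comp: "nonneg_poly S B \<Longrightarrow> nonneg_poly S A \<Longrightarrow> nonneg_poly S (\<lambda>v. A (B v))"
proof (induction rule: nonneg_poly.induct)
  case zero then show ?case using linear_op_zero[OF nonneg_poly_linear_op[OF zero(1)]]
    by (simp add: nonneg_poly.zero)
next
  case (add_pow B c k)
  have l: "linear_op A" using nonneg_poly_linear_op[OF add_pow.prems] .
  have "nonneg_poly S (\<lambda>v. A (B v) + scaleC (complex_of_real c) (A ((S ^^ k) v)))"
    using nonneg_poly_add[OF nonneg_poly_scale[OF nonneg_poly_comp_funpow[OF add_pow.prems] add_pow.hyps(2)]
        add_pow.IH[OF add_pow.prems]] .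
  then show ?case by (simp add: linear_op_add[OF l] linear_op_scaleC[OF l])
qed

end

text \<open>\<open>Y\<^sub>0 = 0\<close>, \<open>Y\<^sub>n\<^sub>+\<^sub>1 = (S + Y\<^sub>n\<^sup>2) / 2\<close>; for \<open>0 \<le> S \<le> 1\<close> the iterates increase to \<open>1 - sqrt (1 - S)\<close>.\<close>
primrec sqrt_iter :: "('a::chilbert \<Rightarrow> 'a) \<Rightarrow> nat \<Rightarrow> 'a \<Rightarrow> 'a" where
  "sqrt_iter S 0 = (\<lambda>v. 0)"
| "sqrt_iter S (Suc n) = (\<lambda>v. scaleC (complex_of_real (1/2)) (S v + sqrt_iter S n (sqrt_iter S n v)))"

declare sqrt_iter.simps(2)[simp del]

definition sqrt_iter_lim :: "('a::chilbert \<Rightarrow> 'a) \<Rightarrow> 'a \<Rightarrow> 'a" where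
  "sqrt_iter_lim S v = (SOME L. norm_conv (\<lambda>n. sqrt_iter S n v) L)"

context
  fixes S :: "'a::chilbert \<Rightarrow> 'a"
  assumes Sb: "bounded_op S" and Sp: "positive_op S" and Sle: "\<And>v. Re (cinner v (S v)) \<le> Re (cinner v v)"
begin

lemma nonneg_poly_sqrt_iter: "nonneg_poly S (sqrt_iter S n)"
proof (induction n)
  case 0 then show ?case by (simp add: nonneg_poly.zero)
next
  case (Suc n)
  have "nonneg_poly S (\<lambda>v. S v + sqrt_iter S n (sqrt_iter S n v))"
    by (rule nonneg_poly_add[OF Sb Sp nonneg_poly_comp[OF Sb Sp Suc Suc] nonneg_poly_self[OF Sb Sp]])
  from nonneg_poly_scale[OF Sb Sp this, of "1/2"] show ?case by (simp add: sqrt_iter.simps(2))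
qed

lemma linear_op_sqrt_iter: "linear_op (sqrt_iter S n)"
  using nonneg_poly_linear_op[OF Sb Sp nonneg_poly_sqrt_iter] .

lemma positive_op_sqrt_iter: "positive_op (sqrt_iter S n)"
  using nonneg_poly_positive_op[OF Sb Sp nonneg_poly_sqrt_iter] .

lemma sqrt_iter_symmetric: "cinner (sqrt_iter S n x) y = cinner x (sqrt_iter S n y)"
  using nonneg_poly_symmetric[OF Sb Sp nonneg_poly_sqrt_iter] .

lemma sqrt_iter_le: "Re (cinner v (sqrt_iter S n v)) \<le> Re (cinner v v)"
proof (induction n arbitrary: v)
  case 0 then show ?case by (simp add: cinner_self_ge0)
next
  case (Suc n)
  have a: "Re (cinner (sqrt_iter S n v) (sqrt_iter S n v)) \<le> Re (cinner v (sqrt_iter S n v))"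
    by (rule positive_contraction_square_le[OF linear_op_sqrt_iter positive_op_sqrt_iter Suc.IH])
  have b: "cinner v (sqrt_iter S n (sqrt_iter S n v)) = cinner (sqrt_iter S n v) (sqrt_iter S n v)"
    by (simp add: sqrt_iter_symmetric)
  have "Re (cinner v (sqrt_iter S (Suc n) v)) = (Re (cinner v (S v))
      + Re (cinner v (sqrt_iter S n (sqrt_iter S n v)))) / 2"
    by (simp add: cinner_scaleC_right cinner_add_right sqrt_iter.simps(2))
  then show ?case using a b Sle[of v] Suc.IH[of v] by simp
qed

lemma cnorm_sqrt_iter_le: "cnorm (sqrt_iter S n v) \<le> cnorm v"
proof -
  have a: "Re (cinner (sqrt_iter S n v) (sqrt_iter S n v)) \<le> Re (cinner v (sqrt_iter S n v))"
    by (rule positive_contraction_square_le[OF linear_op_sqrt_iter positive_op_sqrt_iter sqrt_iter_le])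
  have b: "Re (cinner v (sqrt_iter S n v)) \<le> Re (cinner v v)" by (rule sqrt_iter_le)
  have "(cnorm (sqrt_iter S n v))^2 \<le> (cnorm v)^2"
    unfolding cnorm_power2 using a b by simp
  then show ?thesis using cnorm_nonneg power2_le_imp_le by blast
qed

lemma nonneg_poly_sqrt_iter_Suc_diff: "nonneg_poly S (\<lambda>v. sqrt_iter S (Suc n) v - sqrt_iter S n v)"
proof (induction n)
  case 0 then show ?case using nonneg_poly_sqrt_iter[of 1] by (simp add: sqrt_iter.simps(2))
next
  case (Suc n)
  define D where "D v = sqrt_iter S (Suc n) v - sqrt_iter S n v" for v
  have Dl: "linear_op D" using nonneg_poly_linear_op[OF Sb Sp Suc[folded D_def]] .
  have c: "sqrt_iter S (Suc n) (sqrt_iter S n v) = sqrt_iter S n (sqrt_iter S (Suc n) v)" for v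
    by (rule nonneg_poly_commute_nonneg_poly[OF Sb Sp nonneg_poly_sqrt_iter nonneg_poly_sqrt_iter])
  have eq: "(\<lambda>v. sqrt_iter S (Suc (Suc n)) v - sqrt_iter S (Suc n) v)
      = (\<lambda>v. scaleC (complex_of_real (1/2)) (D (sqrt_iter S (Suc n) v + sqrt_iter S n v)))"
  proof
    fix v
    have "D (sqrt_iter S (Suc n) v + sqrt_iter S n v) =
      sqrt_iter S (Suc n) (sqrt_iter S (Suc n) v) - sqrt_iter S n (sqrt_iter S n v)"
      unfolding linear_op_add[OF Dl] D_def by (simp add: linear_op_add[OF linear_op_sqrt_iter] c)
    moreover have "sqrt_iter S (Suc (Suc n)) v = scaleC (complex_of_real (1/2)) (S v
        + sqrt_iter S (Suc n) (sqrt_iter S (Suc n) v))"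
      by (simp add: sqrt_iter.simps(2)[of S "Suc n"])
    moreover have "sqrt_iter S (Suc n) v = scaleC (complex_of_real (1/2)) (S v
        + sqrt_iter S n (sqrt_iter S n v))"
      by (simp add: sqrt_iter.simps(2)[of S n])
    ultimately show "sqrt_iter S (Suc (Suc n)) v - sqrt_iter S (Suc n) v
        = scaleC (complex_of_real (1/2)) (D (sqrt_iter S (Suc n) v + sqrt_iter S n v))"
      by (simp add: cm.scale_right_diff_distrib cm.scale_right_distrib)
  qed
  have "nonneg_poly S (\<lambda>v. D (sqrt_iter S (Suc n) v + sqrt_iter S n v))"
    by (rule nonneg_poly_comp[OF Sb Sp nonneg_poly_add[OF Sb Sp nonneg_poly_sqrt_iter nonneg_poly_sqrt_iter]])
      (use Suc D_def in simp)
  from nonneg_poly_scale[OF Sb Sp this, of "1/2"] show ?case unfolding eq by simp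
qed

lemma nonneg_poly_sqrt_iter_diff: "n \<le> m \<Longrightarrow> nonneg_poly S (\<lambda>v. sqrt_iter S m v - sqrt_iter S n v)"
proof (induction m)
  case 0 then show ?case by (simp add: nonneg_poly.zero)
next
  case (Suc m)
  show ?case
  proof (cases "n = Suc m")
    case True then show ?thesis by (simp add: nonneg_poly.zero)
  next
    case False
    then have "nonneg_poly S (\<lambda>v. sqrt_iter S m v - sqrt_iter S n v)" using Suc by simp
    from nonneg_poly_add[OF Sb Sp nonneg_poly_sqrt_iter_Suc_diff this, of m] show ?thesis by simp
  qed
qed

lemma sqrt_iter_quadratic_mono: "n \<le> m \<Longrightarrow> Re (cinner v (sqrt_iter S n v)) \<le> Re (cinner v (sqrt_iter S m v))"
proof -
  assume nm: "n \<le> m"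
  have "0 \<le> Re (cinner v (sqrt_iter S m v - sqrt_iter S n v))"
    using positive_op_Re[OF nonneg_poly_positive_op[OF Sb Sp nonneg_poly_sqrt_iter_diff[OF nm]]]
      by simp
  then show ?thesis by (simp add: cinner_diff_right)
qed

lemma sqrt_iter_diff_norm: "n \<le> m \<Longrightarrow>
    Re (cinner (sqrt_iter S m v - sqrt_iter S n v) (sqrt_iter S m v - sqrt_iter S n v))
    \<le> Re (cinner v (sqrt_iter S m v)) - Re (cinner v (sqrt_iter S n v))"
proof -
  assume nm: "n \<le> m"
  define D where "D v = sqrt_iter S m v - sqrt_iter S n v" for v
  have Dp: "nonneg_poly S D" unfolding D_def using nonneg_poly_sqrt_iter_diff[OF nm] .
  have Dle: "Re (cinner w (D w)) \<le> Re (cinner w w)" for w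
    using sqrt_iter_le[of w m] positive_op_Re[OF positive_op_sqrt_iter[of n], of w] unfolding D_def
      by (simp add: cinner_diff_right)
  have "Re (cinner (D v) (D v)) \<le> Re (cinner v (D v))"
    by (rule positive_contraction_square_le[OF nonneg_poly_linear_op[OF Sb Sp Dp]
          nonneg_poly_positive_op[OF Sb Sp Dp] Dle])
  then show ?thesis unfolding D_def by (simp add: cinner_diff_right)
qed

lemma sqrt_iter_conv: "norm_conv (\<lambda>n. sqrt_iter S n v) (sqrt_iter_lim S v)"
proof -
  define r where "r n = Re (cinner v (sqrt_iter S n v))" for n
  have "incseq r" unfolding r_def by (intro incseq_SucI sqrt_iter_quadratic_mono) simp
  moreover have "r n \<le> Re (cinner v v)" for n unfolding r_def by (rule sqrt_iter_le)
  ultimately obtain L where "r \<longlonglongrightarrow> L" using incseq_convergent[of r] by blast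
  then have "convergent r" by (rule convergentI)
  then have "Cauchy r" by (rule convergent_Cauchy)
  have "\<exists>N. \<forall>m\<ge>N. \<forall>n\<ge>N. cnorm (sqrt_iter S m v - sqrt_iter S n v) < e" if e: "e > 0" for e
  proof -
    obtain N where N: "\<And>m n. m \<ge> N \<Longrightarrow> n \<ge> N \<Longrightarrow> dist (r m) (r n) < e^2"
      using \<open>Cauchy r\<close> e unfolding Cauchy_def by (meson zero_less_power)
    have "cnorm (sqrt_iter S m v - sqrt_iter S n v) < e" if "m \<ge> N" "n \<ge> N" for m n
    proof -
      have key: "(cnorm (sqrt_iter S m v - sqrt_iter S n v))^2 < e^2" if "m \<ge> N" "n \<ge> N" "n \<le> m" for m n
        using sqrt_iter_diff_norm[OF that(3), of v] N[OF that(1,2)]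
          unfolding cnorm_power2 r_def dist_real_def by linarith
      have "(cnorm (sqrt_iter S m v - sqrt_iter S n v))^2 < e^2"
      proof (cases "n \<le> m")
        case True then show ?thesis using key that by blast
      next
        case False then show ?thesis
          using key[of n m] that cnorm_minus_commute[of "sqrt_iter S n v" "sqrt_iter S m v"] by simp
      qed
      then show ?thesis using e power2_less_imp_less by (metis less_le)
    qed
    then show ?thesis by blast
  qed
  then obtain L where "norm_conv (\<lambda>n. sqrt_iter S n v) L"
    using norm_conv_Cauchy[of "\<lambda>n. sqrt_iter S n v"] by blast
  then show ?thesis unfolding sqrt_iter_lim_def by (rule someI)
qed

lemma linear_op_sqrt_iter_lim: "linear_op (sqrt_iter_lim S)"
  unfolding linear_op_def
proof (intro conjI allI)
  fix x y
  have "norm_conv (\<lambda>n. sqrt_iter S n x + sqrt_iter S n y) (sqrt_iter_lim S x + sqrt_iter_lim S y)"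
    by (rule norm_conv_add[OF sqrt_iter_conv sqrt_iter_conv])
  moreover have "norm_conv (\<lambda>n. sqrt_iter S n x + sqrt_iter S n y) (sqrt_iter_lim S (x + y))"
    using sqrt_iter_conv[of "x + y"] by (simp add: linear_op_add[OF linear_op_sqrt_iter])
  ultimately show "sqrt_iter_lim S (x + y) = sqrt_iter_lim S x + sqrt_iter_lim S y"
    using norm_conv_unique by blast
next
  fix c x
  have "norm_conv (\<lambda>n. scaleC c (sqrt_iter S n x)) (scaleC c (sqrt_iter_lim S x))"
    by (rule norm_conv_scaleC[OF sqrt_iter_conv])
  moreover have "norm_conv (\<lambda>n. scaleC c (sqrt_iter S n x)) (sqrt_iter_lim S (scaleC c x))"
    using sqrt_iter_conv[of "scaleC c x"] by (simp add: linear_op_scaleC[OF linear_op_sqrt_iter])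
  ultimately show "sqrt_iter_lim S (scaleC c x) = scaleC c (sqrt_iter_lim S x)"
    using norm_conv_unique by blast
qed

lemma cnorm_sqrt_iter_lim_le: "cnorm (sqrt_iter_lim S v) \<le> cnorm v"
  by (rule norm_conv_cnorm_le[OF sqrt_iter_conv cnorm_sqrt_iter_le])

lemma sqrt_iter_lim_cinner: "(\<lambda>n. cinner w (sqrt_iter S n v)) \<longlonglongrightarrow> cinner w (sqrt_iter_lim S v)"
  by (rule norm_conv_cinner[OF sqrt_iter_conv])

lemma sqrt_iter_lim_symmetric: "cinner (sqrt_iter_lim S x) y = cinner x (sqrt_iter_lim S y)"
proof -
  have "(\<lambda>n. cinner x (sqrt_iter S n y)) \<longlonglongrightarrow> cinner x (sqrt_iter_lim S y)"
    by (rule sqrt_iter_lim_cinner)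
  moreover have "(\<lambda>n. cinner x (sqrt_iter S n y)) \<longlonglongrightarrow> cnj (cinner y (sqrt_iter_lim S x))"
  proof -
    have "(\<lambda>n. cnj (cinner y (sqrt_iter S n x))) \<longlonglongrightarrow> cnj (cinner y (sqrt_iter_lim S x))"
      by (intro tendsto_cnj sqrt_iter_lim_cinner)
    moreover have "cnj (cinner y (sqrt_iter S n x)) = cinner x (sqrt_iter S n y)" for n
      by (metis sqrt_iter_symmetric cinner_commute)
    ultimately show ?thesis by simp
  qed
  ultimately have "cinner x (sqrt_iter_lim S y) = cnj (cinner y (sqrt_iter_lim S x))"
    by (rule LIMSEQ_unique)
  then show ?thesis by (metis cinner_commute)
qed

lemma bounded_op_sqrt_iter_lim: "bounded_op (sqrt_iter_lim S)"
  by (rule bounded_opI[OF linear_op_sqrt_iter_lim, of 1]) (simp add: cnorm_sqrt_iter_lim_le)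

lemma positive_op_sqrt_iter_lim: "positive_op (sqrt_iter_lim S)"
proof -
  have "0 \<le> Re (cinner v (sqrt_iter_lim S v))" for v
    using positive_op_Re[OF positive_op_sqrt_iter]
    by (intro LIMSEQ_le_const[OF tendsto_Re[OF sqrt_iter_lim_cinner]]) auto
  then show ?thesis unfolding positive_op_def using symmetric_op_Im_zero[OF sqrt_iter_lim_symmetric]
    by blast
qed

lemma sqrt_iter_lim_le: "Re (cinner v (sqrt_iter_lim S v)) \<le> Re (cinner v v)"
  using sqrt_iter_le by (intro LIMSEQ_le_const2[OF tendsto_Re[OF sqrt_iter_lim_cinner]]) auto

lemma sqrt_iter_lim_fixpoint: "scaleC 2 (sqrt_iter_lim S v) = S v + sqrt_iter_lim S (sqrt_iter_lim S v)"
proof -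
  define Y where "Y = sqrt_iter_lim S"
  have c1: "norm_conv (\<lambda>n. sqrt_iter S n (sqrt_iter S n v)) (Y (Y v))"
  proof -
    have "cnorm (sqrt_iter S n (sqrt_iter S n v) - Y (Y v)) \<le> cnorm (sqrt_iter S n v - Y v)
        + cnorm (sqrt_iter S n (Y v) - Y (Y v))" for n
    proof -
      have "sqrt_iter S n (sqrt_iter S n v) - Y (Y v) = sqrt_iter S n (sqrt_iter S n v - Y v)
          + (sqrt_iter S n (Y v) - Y (Y v))"
        by (simp add: linear_op_diff[OF linear_op_sqrt_iter])
      then have "cnorm (sqrt_iter S n (sqrt_iter S n v) - Y (Y v))
          \<le> cnorm (sqrt_iter S n (sqrt_iter S n v - Y v)) + cnorm (sqrt_iter S n (Y v) - Y (Y v))"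
        using cnorm_triangle by metis
      then show ?thesis using cnorm_sqrt_iter_le[of n "sqrt_iter S n v - Y v"] by linarith
    qed
    moreover have "(\<lambda>n. cnorm (sqrt_iter S n v - Y v) + cnorm (sqrt_iter S n (Y v) - Y (Y v))) \<longlonglongrightarrow> 0 + 0"
      using sqrt_iter_conv[of v] sqrt_iter_conv[of "Y v"] unfolding norm_conv_def Y_def
        by (intro tendsto_intros)
    ultimately show ?thesis unfolding norm_conv_def
      by (intro real_squeeze_zero[OF cnorm_nonneg]) auto
  qed
  have "norm_conv (\<lambda>n. sqrt_iter S (Suc n) v) (scaleC (complex_of_real (1/2)) (S v + Y (Y v)))"
    using norm_conv_scaleC[OF norm_conv_add[OF norm_conv_const c1]]
      by (simp add: sqrt_iter.simps(2))
  moreover have "norm_conv (\<lambda>n. sqrt_iter S (Suc n) v) (Y v)" unfolding Y_def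
    by (rule norm_conv_Suc[OF sqrt_iter_conv])
  ultimately have "Y v = scaleC (complex_of_real (1/2)) (S v + Y (Y v))" using norm_conv_unique
    by blast
  then have "scaleC 2 (Y v) = scaleC 2 (scaleC (complex_of_real (1/2)) (S v + Y (Y v)))"
    by (rule arg_cong)
  also have "\<dots> = S v + Y (Y v)" by simp
  finally show ?thesis unfolding Y_def .
qed

lemma sqrt_iter_lim_commute:
  assumes Wb: "bounded_op W" and WS: "\<And>x. W (S x) = S (W x)"
  shows "W (sqrt_iter_lim S v) = sqrt_iter_lim S (W v)"
proof -
  have "norm_conv (\<lambda>n. W (sqrt_iter S n v)) (W (sqrt_iter_lim S v))"
    by (rule norm_conv_bounded_op[OF Wb sqrt_iter_conv])
  moreover have "W (sqrt_iter S n v) = sqrt_iter S n (W v)" for n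
    by (rule nonneg_poly_commute[OF Sb Sp nonneg_poly_sqrt_iter bounded_op_linear[OF Wb] WS])
  ultimately have "norm_conv (\<lambda>n. sqrt_iter S n (W v)) (W (sqrt_iter_lim S v))" by simp
  then show ?thesis using sqrt_iter_conv norm_conv_unique by blast
qed

end

lemma positive_op_complement:
  assumes Tl: "linear_op T" and Tp: "positive_op T" and Tle: "\<And>v. Re (cinner v (T v)) \<le> Re (cinner v v)"
  shows "positive_op (op_sub id T)" and "Re (cinner v (op_sub id T v)) \<le> Re (cinner v v)"
proof -
  have "cinner (op_sub id T x) y = cinner x (op_sub id T y)" for x y
    by (rule op_sub_symmetric) (simp_all add: positive_op_symmetric[OF Tl Tp])
  moreover have "0 \<le> Re (cinner v (op_sub id T v))" for v
    using Tle[of v] by (simp add: op_sub_apply cinner_diff_right)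
  ultimately show "positive_op (op_sub id T)"
    unfolding positive_op_def using symmetric_op_Im_zero by blast
  show "Re (cinner v (op_sub id T v)) \<le> Re (cinner v v)"
    using positive_op_Re[OF Tp, of v] by (simp add: op_sub_apply cinner_diff_right)
qed

text \<open>With \<open>S = 1 - T\<close>, the limit \<open>Y\<close> of the iteration solves \<open>2Y = S + Y\<^sup>2\<close>, so \<open>(1 - Y)\<^sup>2 = T\<close>.\<close>
lemma contraction_sqrt_exists:
  fixes T :: "'a::chilbert \<Rightarrow> 'a"
  assumes Tb: "bounded_op T" and Tp: "positive_op T" and Tle: "\<And>v. Re (cinner v (T v)) \<le> Re (cinner v v)"
  shows "\<exists>R. bounded_op R \<and> positive_op R \<and> R \<circ> R = T
    \<and> (\<forall>W. bounded_op W \<and> W \<circ> T = T \<circ> W \<longrightarrow> W \<circ> R = R \<circ> W)"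
proof -
  have Tl: "linear_op T" using Tb by (rule bounded_op_linear)
  define S where "S = op_sub id T"
  have Sb: "bounded_op S" unfolding S_def by (rule bounded_op_sub[OF bounded_op_id Tb])
  note Sp = positive_op_complement(1)[OF Tl Tp Tle, folded S_def]
    and Sle = positive_op_complement(2)[OF Tl Tp Tle, folded S_def]
  define Y where "Y = sqrt_iter_lim S"
  note Yfacts = bounded_op_sqrt_iter_lim positive_op_sqrt_iter_lim sqrt_iter_lim_le
    sqrt_iter_lim_fixpoint sqrt_iter_lim_commute
  note Yb = Yfacts(1)[OF Sb Sp Sle, folded Y_def] and Yp = Yfacts(2)[OF Sb Sp Sle, folded Y_def]
    and Yle = Yfacts(3)[OF Sb Sp Sle, folded Y_def] and Yfix = Yfacts(4)[OF Sb Sp Sle, folded Y_def]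
  have Yl: "linear_op Y" using Yb by (rule bounded_op_linear)
  define R where "R = op_sub id Y"
  have "R (R v) = T v" for v
  proof -
    have "Y (Y v) = Y v + Y v - v + T v"
      using Yfix[of v] cm.scale_left_distrib[of 1 1 "Y v"] unfolding S_def
        by (simp add: op_sub_apply algebra_simps)
    then show ?thesis unfolding R_def by (simp add: op_sub_apply linear_op_diff[OF Yl])
  qed
  moreover have "W \<circ> R = R \<circ> W" if Wb: "bounded_op W" and WT: "W \<circ> T = T \<circ> W" for W
  proof -
    have Wl: "linear_op W" using Wb by (rule bounded_op_linear)
    have "W (S x) = S (W x)" for x
      unfolding S_def using comp_commute_apply[OF WT]
        by (simp add: op_sub_apply linear_op_diff[OF Wl])
    then have "W (Y v) = Y (W v)" for v unfolding Y_def by (rule Yfacts(5)[OF Sb Sp Sle Wb])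
    then show ?thesis unfolding R_def by (simp add: fun_eq_iff op_sub_apply linear_op_diff[OF Wl])
  qed
  moreover have "bounded_op R" unfolding R_def by (rule bounded_op_sub[OF bounded_op_id Yb])
  moreover have "positive_op R" unfolding R_def by (rule positive_op_complement(1)[OF Yl Yp Yle])
  ultimately show ?thesis by (auto simp: fun_eq_iff)
qed

lemma Re_cinner_op_le:
  assumes "\<And>x. cnorm (T x) \<le> K * cnorm x"
  shows "Re (cinner v (T v)) \<le> K * Re (cinner v (v::'a::chilbert))"
proof -
  have "Re (cinner v (T v)) \<le> cnorm v * (K * cnorm v)"
    using cmod_cinner_le[of v "T v"] complex_Re_le_cmod[of "cinner v (T v)"]
      mult_left_mono[OF assms[of v] cnorm_nonneg[of v]] by linarith
  also have "\<dots> = K * Re (cinner v v)" by (simp add: cnorm_power2[symmetric] power2_eq_square)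
  finally show ?thesis .
qed

lemma positive_sqrt_exists:
  fixes T :: "'a::chilbert \<Rightarrow> 'a"
  assumes Tb: "bounded_op T" and Tp: "positive_op T"
  shows "\<exists>R. bounded_op R \<and> positive_op R \<and> R \<circ> R = T
    \<and> (\<forall>W. bounded_op W \<and> W \<circ> T = T \<circ> W \<longrightarrow> W \<circ> R = R \<circ> W)"
proof -
  have Tl: "linear_op T" using Tb by (rule bounded_op_linear)
  obtain K where K: "K > 0" "\<And>x. cnorm (T x) \<le> K * cnorm x" using bounded_op_pos_bound[OF Tb]
    by blast
  define T' where "T' v = scaleC (complex_of_real (1 / K)) (T v)" for v
  have T'b: "bounded_op T'" unfolding T'_def by (rule bounded_op_scaleC_op[OF Tb])
  have T'p: "positive_op T'" unfolding T'_def using K(1)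
    by (intro positive_op_scaleR_op[OF Tp]) simp
  have T'le: "Re (cinner v (T' v)) \<le> Re (cinner v v)" for v
    using Re_cinner_op_le[OF K(2), of v] K(1) unfolding T'_def cinner_scaleC_right
    by (simp add: pos_divide_le_eq mult.commute)
  obtain R' where R': "bounded_op R'" "positive_op R'" "R' \<circ> R' = T'"
    "\<And>W. bounded_op W \<Longrightarrow> W \<circ> T' = T' \<circ> W \<Longrightarrow> W \<circ> R' = R' \<circ> W"
    using contraction_sqrt_exists[OF T'b T'p T'le] by blast
  have R'l: "linear_op R'" using R'(1) by (rule bounded_op_linear)
  define R where "R v = scaleC (complex_of_real (sqrt K)) (R' v)" for v
  have "R (R v) = T v" for v
  proof -
    have "R (R v) = scaleC (complex_of_real K) (R' (R' v))"
      unfolding R_def using K(1) by (simp add: linear_op_scaleC[OF R'l] flip: of_real_mult)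
    also have "R' (R' v) = T' v" using R'(3) by (metis comp_apply)
    finally show ?thesis unfolding T'_def using K(1) by simp
  qed
  moreover have "W \<circ> R = R \<circ> W" if Wb: "bounded_op W" and WT: "W \<circ> T = T \<circ> W" for W
  proof -
    have Wl: "linear_op W" using Wb by (rule bounded_op_linear)
    have "W \<circ> T' = T' \<circ> W"
      unfolding T'_def using comp_commute_apply[OF WT]
        by (simp add: fun_eq_iff linear_op_scaleC[OF Wl])
    then have "W (R' x) = R' (W x)" for x using R'(4)[OF Wb] comp_commute_apply by metis
    then show ?thesis unfolding R_def by (simp add: fun_eq_iff linear_op_scaleC[OF Wl])
  qed
  moreover have "bounded_op R" unfolding R_def by (rule bounded_op_scaleC_op[OF R'(1)])
  moreover have "positive_op R" unfolding R_def using K(1)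
    by (intro positive_op_scaleR_op[OF R'(2)]) simp
  ultimately show ?thesis by (auto simp: fun_eq_iff)
qed

lemma positive_sqrt_unique:
  fixes R1 R2 :: "'a::chilbert \<Rightarrow> 'a"
  assumes b1: "bounded_op R1" and p1: "positive_op R1" and b2: "bounded_op R2" and p2: "positive_op R2"
    and sq: "R1 \<circ> R1 = R2 \<circ> R2" and c: "R1 \<circ> R2 = R2 \<circ> R1"
  shows "R1 = R2"
proof
  fix v
  have l1: "linear_op R1" and l2: "linear_op R2" using b1 b2 by (simp_all add: bounded_op_linear)
  define D where "D x = R1 x - R2 x" for x
  have Dsym: "cinner (D x) y = cinner x (D y)" for x y
    unfolding D_def
    by (simp add: cinner_diff_left cinner_diff_right positive_op_symmetric[OF l1 p1] positive_op_symmetric[OF l2 p2])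
  define z where "z = D v"
  have sq': "R1 (R1 x) = R2 (R2 x)" for x using sq by (metis comp_apply)
  have c': "R1 (R2 x) = R2 (R1 x)" for x using c by (metis comp_apply)
  \<comment> \<open>\<open>(R1 + R2)(R1 - R2) = R1\<^sup>2 - R2\<^sup>2 = 0\<close> as \<open>R1, R2\<close> commute.\<close>
  have "R1 z + R2 z = 0" unfolding z_def D_def
    by (simp add: linear_op_diff[OF l1] linear_op_diff[OF l2] sq' c')
  then have "Re (cinner z (R1 z)) + Re (cinner z (R2 z)) = 0"
    by (metis cinner_add_right cinner_zero_right plus_complex.sel(1) zero_complex.sel(1))
  then have "Re (cinner z (R1 z)) = 0" "Re (cinner z (R2 z)) = 0"
    using positive_op_Re[OF p1, of z] positive_op_Re[OF p2, of z] by linarith+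
  then have "R1 z = 0" "R2 z = 0"
    using positive_op_quadratic_zero[OF l1 p1] positive_op_quadratic_zero[OF l2 p2] by blast+
  then have "D z = 0" unfolding D_def by simp
  then have "cinner z z = 0" unfolding z_def by (simp add: Dsym[symmetric])
  then have "z = 0" using cinner_self_eq_zero by blast
  then show "R1 v = R2 v" unfolding z_def D_def by simp
qed

lemma abs_op_symmetric:
  fixes u :: "'a::chilbert \<Rightarrow> 'a"
  assumes ub: "bounded_op u" and us: "\<And>x y. cinner (u x) y = cinner x (u y)"
  shows "bounded_op (abs_op u) \<and> positive_op (abs_op u) \<and> abs_op u \<circ> abs_op u = u \<circ> u"
proof -
  have "cinner v ((u \<circ> u) v) = cinner (u v) (u v)" for v by (simp add: us)
  then have "positive_op (u \<circ> u)" unfolding positive_op_def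
    by (simp add: cinner_self_Im cinner_self_ge0)
  then obtain R where R: "bounded_op R" "positive_op R" "R \<circ> R = u \<circ> u"
    "\<And>W. bounded_op W \<Longrightarrow> W \<circ> (u \<circ> u) = (u \<circ> u) \<circ> W \<Longrightarrow> W \<circ> R = R \<circ> W"
    using positive_sqrt_exists[OF bounded_op_comp[OF ub ub]] by blast
  have U: "y = R" if y: "bounded_op y" "positive_op y" "y \<circ> y = u \<circ> u" for y
  proof (rule positive_sqrt_unique[OF y(1,2) R(1,2)])
    show "y \<circ> y = R \<circ> R" using y(3) R(3) by simp
    have "y \<circ> (u \<circ> u) = (u \<circ> u) \<circ> y" unfolding y(3)[symmetric] by (simp add: comp_assoc)
    then show "y \<circ> R = R \<circ> y" by (rule R(4)[OF y(1)])
  qed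
  have "abs_op u = R"
    unfolding abs_op_def adj_eq_self[OF us] by (rule the_equality) (use R(1-3) U in blast)+
  then show ?thesis using R(1-3) by simp
qed

section \<open>Range projections in a von Neumann algebra\<close>

lemma von_neumann_algebra_bounded_op: "von_neumann_algebra M \<Longrightarrow> T \<in> M \<Longrightarrow> bounded_op T"
  unfolding von_neumann_algebra_def by blast

lemma von_neumann_algebra_memI:
  assumes vn: "von_neumann_algebra M" and "bounded_op P" and "\<And>T. T \<in> commutant M \<Longrightarrow> P \<circ> T = T \<circ> P"
  shows "P \<in> M"
proof -
  have "P \<in> commutant (commutant M)" unfolding commutant_def[of "commutant M"] using assms by blast
  then show "P \<in> M" using vn unfolding von_neumann_algebra_def by simp
qed

lemma commutant_bounded_op: "T \<in> commutant M \<Longrightarrow> bounded_op T" unfolding commutant_def by blast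

lemma commutant_commute: "T \<in> commutant M \<Longrightarrow> A \<in> M \<Longrightarrow> T \<circ> A = A \<circ> T" unfolding commutant_def by blast

lemma ker_proj_commute:
  assumes cb: "bounded_op c" and cs: "\<And>x y. cinner (c x) y = cinner x (c y)"
    and Tb: "bounded_op T" and Tc: "T \<circ> c = c \<circ> T"
  shows "ker_proj c (T x) = T (ker_proj c x)"
proof (rule ker_proj_unique[OF cb])
  have "adj (T \<circ> c) = adj (c \<circ> T)" using Tc by simp
  then have cT: "c \<circ> adj T = adj T \<circ> c"
    using adj_comp[OF Tb cb] adj_comp[OF cb Tb] adj_eq_self[OF cs] by simp
  show "c (T (ker_proj c x)) = 0"
    using comp_commute_apply[OF Tc, symmetric] ker_proj_in_ker[OF cb] linear_op_zero[OF bounded_op_linear[OF Tb]]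
    by simp
  show "cinner w (T x - T (ker_proj c x)) = 0" if w: "c w = 0" for w
  proof -
    have "c (adj T w) = 0"
      using comp_commute_apply[OF cT, of w] w linear_op_zero[OF linear_op_adj[OF Tb]] by simp
    then have "cinner (adj T w) (x - ker_proj c x) = 0" by (rule ker_proj_orthogonal[OF cb])
    then show ?thesis
      by (simp add: linear_op_diff[OF bounded_op_linear[OF Tb], symmetric] cinner_adj_left[OF Tb])
  qed
qed

text \<open>For symmetric \<open>c\<close> the kernel is the orthogonal complement of the range, so this is the
  projection onto the closure of the range.\<close>
definition range_closure_proj :: "('a::chilbert \<Rightarrow> 'a) \<Rightarrow> 'a \<Rightarrow> 'a" where
  "range_closure_proj c = op_sub id (ker_proj c)"

context
  fixes c :: "'a::chilbert \<Rightarrow> 'a"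
  assumes cb: "bounded_op c" and cs: "\<And>x y. cinner (c x) y = cinner x (c y)"
begin

lemma range_closure_proj_apply: "range_closure_proj c x = x - ker_proj c x"
  unfolding range_closure_proj_def op_sub_apply by simp

lemma bounded_op_range_closure_proj: "bounded_op (range_closure_proj c)"
  unfolding range_closure_proj_def
    by (rule bounded_op_sub[OF bounded_op_id bounded_op_ker_proj[OF cb]])

lemma range_closure_proj_symmetric:
  "cinner (range_closure_proj c x) y = cinner x (range_closure_proj c y)"
  unfolding range_closure_proj_def
    by (rule op_sub_symmetric) (simp_all add: ker_proj_symmetric[OF cb])

lemma range_closure_proj_is_proj: "is_proj (range_closure_proj c)"
proof -
  have "range_closure_proj c (range_closure_proj c x) = range_closure_proj c x" for x
    unfolding range_closure_proj_apply linear_op_diff[OF linear_op_ker_proj[OF cb]]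
    by (simp add: ker_proj_idem[OF cb])
  then show ?thesis
    unfolding is_proj_def using range_closure_proj_symmetric by (auto intro!: adj_eq_self)
qed

lemma range_closure_proj_comp: "range_closure_proj c \<circ> c = c"
proof
  fix x
  have "ker_proj c (c x) = 0"
    by (rule ker_proj_unique[OF cb]) (auto simp: linear_op_zero[OF bounded_op_linear[OF cb]] cs[symmetric])
  then show "(range_closure_proj c \<circ> c) x = c x" by (simp add: range_closure_proj_apply)
qed

lemma cnorm_ker_le_cnorm_ker_proj:
  assumes w: "c w = 0" and wv: "cinner w w = cinner w v"
  shows "cnorm w \<le> cnorm (ker_proj c v)"
proof -
  have "cinner w w = cinner w (ker_proj c v)"
    unfolding wv using ker_proj_fixes_ker[OF cb w] ker_proj_symmetric[OF cb, of w v] by simp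
  then have "cnorm w * cnorm w = Re (cinner w (ker_proj c v))"
    by (metis cnorm_power2 power2_eq_square)
  then have "cnorm w * cnorm w \<le> cnorm w * cnorm (ker_proj c v)"
    using cmod_cinner_le[of w "ker_proj c v"] complex_Re_le_cmod[of "cinner w (ker_proj c v)"]
      by linarith
  then show ?thesis by (rule self_mult_le_imp_le[OF cnorm_nonneg cnorm_nonneg])
qed

lemma range_closure_proj_least:
  assumes qb: "bounded_op q" and qp: "is_proj q" and qc: "q \<circ> c = c"
  shows "op_le (range_closure_proj c) q"
proof -
  have qsym: "cinner (q x) y = cinner x (q y)" for x y
    using cinner_adj_right[OF qb, of x y] qp unfolding is_proj_def by simp
  have qq: "q (q x) = q x" for x using qp unfolding is_proj_def by (metis comp_apply)
  have cq: "c (q y) = c y" for y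
  proof (rule cinner_right_eqI)
    fix x
    have "cinner x (c (q y)) = cinner (q (c x)) y" by (simp add: cs[symmetric] qsym)
    then show "cinner x (c (q y)) = cinner x (c y)" using comp_commute_apply qc
      by (metis comp_apply cs)
  qed
  define X where "X = op_sub q (range_closure_proj c)"
  have Xsym: "cinner (X x) y = cinner x (X y)" for x y
    unfolding X_def by (rule op_sub_symmetric[OF qsym range_closure_proj_symmetric])
  have "0 \<le> Re (cinner v (X v))" for v
  proof -
    define w where "w = v - q v"
    have cw: "c w = 0" unfolding w_def by (simp add: linear_op_diff[OF bounded_op_linear[OF cb]] cq)
    have wq: "cinner w (q v) = 0" unfolding w_def by (simp add: cinner_diff_left qsym qq)
    have "Re (cinner v v) = Re (cinner (q v) (q v)) + Re (cinner w w)"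
      using Re_cinner_self_add[of "q v" w] wq Re_cinner_commute[of "q v" w] unfolding w_def by simp
    moreover have "cinner v (q v) = cinner (q v) (q v)" by (simp add: qsym qq)
    moreover have "cinner v (ker_proj c v) = cinner (ker_proj c v) (ker_proj c v)"
      using ker_proj_symmetric[OF cb, of v "ker_proj c v"] ker_proj_idem[OF cb] by simp
    moreover have "cinner w w = cinner w v" using wq unfolding w_def
      by (simp add: cinner_diff_right)
    then have "(cnorm w)^2 \<le> (cnorm (ker_proj c v))^2"
      using cnorm_ker_le_cnorm_ker_proj[OF cw] cnorm_nonneg power_mono by blast
    ultimately show ?thesis
      unfolding X_def op_sub_apply range_closure_proj_apply cnorm_power2
        by (simp add: cinner_diff_right)
  qed
  then show ?thesis
    unfolding op_le_def positive_op_def X_def[symmetric] using symmetric_op_Im_zero[OF Xsym]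
      by blast
qed

end

lemma op_le_antisym:
  assumes "linear_op A" "linear_op B" "op_le A B" "op_le B A"
  shows "A = B"
proof -
  define D where "D = op_sub B A"
  have "cinner v (D v) = 0" for v
  proof -
    have "Re (cinner v (A v - B v)) = - Re (cinner v (D v))"
      unfolding D_def op_sub_apply by (simp add: cinner_diff_right)
    then show ?thesis using assms(3,4) unfolding op_le_def positive_op_def D_def op_sub_apply
      by (simp add: complex_eq_iff) (smt (verit))
  qed
  moreover have "linear_op D" unfolding D_def by (rule linear_op_op_sub[OF assms(2,1)])
  ultimately have "D = (\<lambda>_. 0)" using quadratic_form_zero_imp_zero by blast
  then show ?thesis unfolding D_def op_sub_def by (auto simp: fun_eq_iff)
qed

lemma range_proj_eq_range_closure_proj:
  fixes M :: "('a::chilbert \<Rightarrow> 'a) set" and c :: "'a \<Rightarrow> 'a"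
  assumes vn: "von_neumann_algebra M" and cb: "bounded_op c"
    and cs: "\<And>x y. cinner (c x) y = cinner x (c y)"
    and cc: "\<And>T. T \<in> commutant M \<Longrightarrow> T \<circ> c = c \<circ> T"
  shows "range_proj M c = range_closure_proj c"
proof -
  note pb = bounded_op_range_closure_proj[OF cb cs]
  have pM: "range_closure_proj c \<in> M"
  proof (rule von_neumann_algebra_memI[OF vn pb])
    fix T assume T: "T \<in> commutant M"
    have Tb: "bounded_op T" using T by (rule commutant_bounded_op)
    show "range_closure_proj c \<circ> T = T \<circ> range_closure_proj c"
      by (rule ext) (simp add: range_closure_proj_apply[OF cb cs] ker_proj_commute[OF cb cs Tb cc[OF T]]
          linear_op_diff[OF bounded_op_linear[OF Tb]])
  qed
  define \<Phi> where "\<Phi> p \<longleftrightarrow> p \<in> M \<and> is_proj p \<and> p \<circ> c = c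
      \<and> (\<forall>q\<in>M. is_proj q \<and> q \<circ> c = c \<longrightarrow> op_le p q)" for p
  have P: "\<Phi> (range_closure_proj c)"
    unfolding \<Phi>_def using pM range_closure_proj_is_proj[OF cb cs] range_closure_proj_comp[OF cb cs]
      range_closure_proj_least[OF cb cs von_neumann_algebra_bounded_op[OF vn]] by blast
  have U: "p = range_closure_proj c" if "\<Phi> p" for p
    using that P pM unfolding \<Phi>_def
    by (intro op_le_antisym bounded_op_linear pb von_neumann_algebra_bounded_op[OF vn]) blast+
  show ?thesis unfolding range_proj_def \<Phi>_def[symmetric] using P U by (rule the_equality)
qed

lemma range_proj_eq_id_injective:
  fixes M :: "('a::chilbert \<Rightarrow> 'a) set" and c :: "'a \<Rightarrow> 'a"
  assumes vn: "von_neumann_algebra M" and cb: "bounded_op c"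
    and cs: "\<And>x y. cinner (c x) y = cinner x (c y)"
    and cc: "\<And>T. T \<in> commutant M \<Longrightarrow> T \<circ> c = c \<circ> T"
    and rp: "range_proj M c = id" and cv: "c v = 0"
  shows "v = 0"
proof -
  have "range_closure_proj c v = v" using rp range_proj_eq_range_closure_proj[OF vn cb cs cc]
    by simp
  then show ?thesis using ker_proj_fixes_ker[OF cb cv] range_closure_proj_apply[OF cb cs] by simp
qed

section \<open>Strict effects\<close>

lemma effectD:
  assumes "effect a" "bounded_op a"
  shows "positive_op a" "positive_op (op_sub id a)" "linear_op a"
    "\<And>x y. cinner (a x) y = cinner x (a y)"
  using assms unfolding effect_def op_le_def
    by (auto intro: positive_op_symmetric bounded_op_linear)

lemma range_proj_eq_id_of_null_proj: "null_proj M a = op_zero \<Longrightarrow> range_proj M a = id"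
  unfolding null_proj_def op_zero_def op_sub_def by (simp add: fun_eq_iff)

lemma range_proj_complement_eq_id_of_supp_proj: "supp_proj M a = op_zero \<Longrightarrow> range_proj M (op_sub id a) = id"
  unfolding supp_proj_def op_zero_def op_sub_def by (simp add: fun_eq_iff)

lemma strict_injective:
  fixes M :: "('a::chilbert \<Rightarrow> 'a) set"
  assumes vn: "von_neumann_algebra M" and aM: "a \<in> M" and st: "strict M a"
  shows "a v = 0 \<Longrightarrow> v = 0" and "a v = v \<Longrightarrow> v = 0"
proof -
  have ab: "bounded_op a" using vn aM by (rule von_neumann_algebra_bounded_op)
  have asym: "cinner (a x) y = cinner x (a y)" for x y
    using st effectD[OF _ ab] unfolding strict_def by blast
  have aT: "T \<circ> a = a \<circ> T" if "T \<in> commutant M" for T using that aM by (rule commutant_commute)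
  show "v = 0" if "a v = 0"
    using range_proj_eq_id_injective[OF vn ab asym aT _ that] st range_proj_eq_id_of_null_proj
    unfolding strict_def by blast
  have T1a: "T \<circ> op_sub id a = op_sub id a \<circ> T" if T: "T \<in> commutant M" for T
    using comp_commute_apply[OF aT[OF T]] linear_op_diff[OF bounded_op_linear[OF commutant_bounded_op[OF T]]]
    by (simp add: fun_eq_iff op_sub_apply)
  have ss: "cinner (op_sub id a x) y = cinner x (op_sub id a y)" for x y
    by (rule op_sub_symmetric) (simp_all add: asym)
  have rp1: "range_proj M (op_sub id a) = id"
    using st range_proj_complement_eq_id_of_supp_proj unfolding strict_def by blast
  show "v = 0" if av: "a v = v"
  proof (rule range_proj_eq_id_injective[OF vn bounded_op_sub[OF bounded_op_id ab] ss T1a rp1])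
    show "op_sub id a v = 0" using av by (simp add: op_sub_apply)
  qed
qed

text \<open>For commuting \<open>a, b\<close> the two absolute values in \<open>|a - b| + |1 - a - b| = 1\<close> can be
  eliminated: squaring \<open>|1 - a - b| = 1 - |a - b|\<close> gives \<open>|a - b| = a + b - 2ab\<close>.\<close>
lemma abs_compatible_commuting_abs_diff:
  assumes ea: "effect a" and ab: "bounded_op a" and eb: "effect b" and bb: "bounded_op b"
    and ac: "abs_compatible a b" and comm: "a \<circ> b = b \<circ> a"
  shows "abs_op (op_sub a b) x = a x + b x - a (b x) - a (b x)"
proof -
  note efa = effectD[OF ea ab] and efb = effectD[OF eb bb]
  define u where "u = op_sub a b"
  define w where "w = op_sub (op_sub id a) b"
  have u: "u y = a y - b y" for y unfolding u_def op_sub_apply ..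
  have w: "w y = y - a y - b y" for y unfolding w_def op_sub_apply by simp
  have ub: "bounded_op u" unfolding u_def by (rule bounded_op_sub[OF ab bb])
  have wb: "bounded_op w" unfolding w_def
    by (rule bounded_op_sub[OF bounded_op_sub[OF bounded_op_id ab] bb])
  have us: "cinner (u x) y = cinner x (u y)" for x y unfolding u_def
    by (rule op_sub_symmetric[OF efa(4) efb(4)])
  have ws: "cinner (w x) y = cinner x (w y)" for x y unfolding w_def
    by (rule op_sub_symmetric[OF op_sub_symmetric efb(4)]) (simp_all add: efa(4))
  define P where "P = abs_op u"
  define Q where "Q = abs_op w"
  have P: "bounded_op P" "P \<circ> P = u \<circ> u" using abs_op_symmetric[OF ub us] unfolding P_def by blast+
  have QQ: "Q (Q y) = w (w y)" for y using abs_op_symmetric[OF wb ws] unfolding Q_def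
    by (metis comp_apply)
  have Q: "Q y = y - P y" for y using ac unfolding abs_compatible_def P_def Q_def u_def w_def
    by (metis op_add_apply id_apply add_diff_cancel_left')
  have "w (w x) = x - P x - (P x - u (u x))"
    using QQ[of x] P(2) unfolding Q linear_op_diff[OF bounded_op_linear[OF P(1)]]
      by (metis comp_apply)
  then have "P x + P x = x + u (u x) - w (w x)" by (simp add: algebra_simps)
  also have "\<dots> = (a x + b x - a (b x) - a (b x)) + (a x + b x - a (b x) - a (b x))"
    using comp_commute_apply[OF comm] unfolding u w
    by (simp add: linear_op_diff[OF efa(3)] linear_op_diff[OF efb(3)] linear_op_add[OF efa(3)]
        linear_op_add[OF efb(3)] algebra_simps)
  finally show ?thesis unfolding P_def u_def by (rule add_self_cancel)
qed

text \<open>Squaring \<open>|a - b| = a + b - 2ab\<close> once more leaves \<open>4 a (1 - a) (b - b\<^sup>2) = 0\<close>.\<close>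
lemma abs_compatible_commuting_is_proj:
  assumes ea: "effect a" and ab: "bounded_op a" and eb: "effect b" and bb: "bounded_op b"
    and ker0: "\<And>v. a v = 0 \<Longrightarrow> v = 0" and ker1: "\<And>v. a v = v \<Longrightarrow> v = 0"
    and ac: "abs_compatible a b" and comm: "a \<circ> b = b \<circ> a"
  shows "is_proj b"
proof -
  note efa = effectD[OF ea ab] and efb = effectD[OF eb bb]
  note al = efa(3) and bl = efb(3)
  have ba: "b (a y) = a (b y)" for y using comp_commute_apply[OF comm] by simp
  define p where "p y = a y + b y - a (b y) - a (b y)" for y
  have pp: "p (p x) = a (a x) - a (b x) - b (a x) + b (b x)" for x
  proof -
    have "abs_op (op_sub a b) (abs_op (op_sub a b) x) = op_sub a b (op_sub a b x)"
      using abs_op_symmetric[OF bounded_op_sub[OF ab bb] op_sub_symmetric[OF efa(4) efb(4)]]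
      by (metis comp_apply)
    then show ?thesis
      unfolding abs_compatible_commuting_abs_diff[OF ea ab eb bb ac comm, folded p_def]
      by (simp add: op_sub_apply linear_op_diff[OF al] linear_op_diff[OF bl] algebra_simps)
  qed
  have "b (b x) = b x" for x
  proof -
    define t where "t = b x - b (b x)"
    define Z where "Z = a (t - a t)"
    have "p (p x) - (a (a x) - a (b x) - b (a x) + b (b x)) = (Z + Z) + (Z + Z)"
      unfolding p_def Z_def t_def
      by (simp add: linear_op_diff[OF al] linear_op_diff[OF bl] linear_op_add[OF al] linear_op_add[OF bl]
          ba algebra_simps)
    then have "Z + Z = 0" using pp[of x] add_self_cancel[of "Z + Z" 0] by simp
    then have "a (t - a t) = 0" using add_self_cancel[of Z 0] unfolding Z_def by simp
    then have "t - a t = 0" by (rule ker0)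
    then have "t = 0" using ker1[of t] by simp
    then show ?thesis unfolding t_def by simp
  qed
  then show ?thesis unfolding is_proj_def using adj_eq_self[OF efb(4)] by (simp add: fun_eq_iff)
qed

lemma strict_not_is_proj:
  assumes vn: "von_neumann_algebra M" and bM: "b \<in> M" and sb: "strict M b"
  shows "\<not> is_proj b"
proof
  assume "is_proj b"
  then have "b (b v) = b v" for v unfolding is_proj_def by (metis comp_apply)
  then have "b v = 0" for v using strict_injective(2)[OF vn bM sb] by blast
  then show False using sb unfolding strict_def op_zero_def by (simp add: fun_eq_iff)
qed

lemma effect_isometric_imp_fixed:
  assumes ea: "effect a" and ab: "bounded_op a" and iso: "cinner (a z) (a z) = cinner z z"
  shows "a z = z"
proof -
  note ef = effectD[OF ea ab]
  have le1: "Re (cinner y (a y)) \<le> Re (cinner y y)" for y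
    using positive_op_Re[OF ef(2), of y] by (simp add: op_sub_apply cinner_diff_right)
  have "Re (cinner (a z) (a z)) \<le> Re (cinner z (a z))"
    by (rule positive_contraction_square_le[OF ef(3) ef(1) le1])
  then have "Re (cinner z (op_sub id a z)) = 0"
    using iso le1[of z] by (simp add: op_sub_apply cinner_diff_right)
  then have "op_sub id a z = 0"
    using positive_op_quadratic_zero[OF linear_op_op_sub[OF _ ef(3)] ef(2)]
      by (simp add: linear_op_def)
  then show ?thesis by (simp add: op_sub_apply)
qed

lemma adj_square_sandwich_eq_imp_zero:
  assumes ea: "effect a" and ab: "bounded_op a" and ker1: "\<And>v. a v = v \<Longrightarrow> v = 0"
    and xb: "bounded_op x" and h: "adj x \<circ> (a \<circ> a) \<circ> x = adj x \<circ> x"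
  shows "x = op_zero"
proof -
  have "x v = 0" for v
  proof -
    have "cinner (x v) (a (a (x v))) = cinner v (adj x (a (a (x v))))"
      by (rule cinner_adj_right[OF xb])
    also have "adj x (a (a (x v))) = adj x (x v)" using h by (metis comp_apply)
    also have "cinner v (adj x (x v)) = cinner (x v) (x v)"
      by (rule cinner_adj_right[OF xb, symmetric])
    finally have "cinner (a (x v)) (a (x v)) = cinner (x v) (x v)"
      by (simp add: effectD(4)[OF ea ab])
    then show "x v = 0" using ker1 effect_isometric_imp_fixed[OF ea ab] by blast
  qed
  then show ?thesis unfolding op_zero_def by (simp add: fun_eq_iff)
qed

theorem proposition2p4:
  fixes M :: "('h::chilbert \<Rightarrow> 'h) set" and a :: "'h \<Rightarrow> 'h"
  assumes "von_neumann_algebra M" and "a \<in> M" and "strict M a"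
  shows "range_proj M (op_sub id a) = id
    \<and> (\<forall>b\<in>M. effect b \<and> abs_compatible a b \<and> a \<circ> b = b \<circ> a \<longrightarrow> is_proj b)
    \<and> (\<forall>b\<in>M. effect b \<and> strict M b \<and> abs_compatible a b \<longrightarrow> a \<circ> b \<noteq> b \<circ> a)
    \<and> (\<forall>x\<in>M. adj x \<circ> (a \<circ> a) \<circ> x = adj x \<circ> x \<longrightarrow> x = op_zero)"
proof -
  note vn = assms(1) and bounded = von_neumann_algebra_bounded_op[OF assms(1)]
  have ea: "effect a" using assms(3) unfolding strict_def by blast
  note injective = strict_injective[OF assms]
  have i: "range_proj M (op_sub id a) = id"
    using assms(3) range_proj_complement_eq_id_of_supp_proj unfolding strict_def by blast
  have ii: "is_proj b" if "b \<in> M" "effect b" "abs_compatible a b" "a \<circ> b = b \<circ> a" for b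
    using abs_compatible_commuting_is_proj[OF ea bounded[OF assms(2)] that(2) bounded[OF that(1)]
        injective that(3,4)] .
  have iii: "a \<circ> b \<noteq> b \<circ> a" if "b \<in> M" "effect b" "strict M b" "abs_compatible a b" for b
    using ii[OF that(1,2,4)] strict_not_is_proj[OF vn that(1,3)] by blast
  have iv: "x = op_zero" if "x \<in> M" "adj x \<circ> (a \<circ> a) \<circ> x = adj x \<circ> x" for x
    using adj_square_sandwich_eq_imp_zero[OF ea bounded[OF assms(2)] injective(2) bounded[OF that(1)]
        that(2)] .
  show ?thesis using i ii iii iv by blast
qed

end
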